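(* Let $A\in{\operatorname{\mathsf{TPD}}}_n(\mathbb{S}_{\max}^\vee)$ with $\gamma_i=a_{ii}$ ordered so that $\gamma_1\succeq\cdots\succeq\gamma_n$, and $B_k=\gamma_k I\ominus A$. Assume that $\gamma=\gamma_k$ is simple as an algebraic $\mathbb{S}_{\max}$-eigenvalue of $A$. Let $D^{(k)}$ be the $n\times n$ diagonal matrix with diagonal entries $\gamma_1,\ldots, \gamma_{k-1}, \mathbf{0},\ldots, \mathbf{0}$, let $A^{(k)}$ be the complementary of $D^{(k)}$ in $A$, that is $A^{(k)}$ has entries $[A^{(k)}]_{ij}= a_{ij}$ when $i\neq j$ or $i=j\geq k$, and $\mathbf{0}$ elsewhere, so that $A= D^{(k)}\oplus A^{(k)}$. Then, we have \[ v^{(k)}=(B_k)^\mathrm{adj}_{:,k}= \lambda_k ((\gamma I\ominus D^{(k)})^{-1} A^{(k)})_{:,k}^*\quad \text{with}\; \lambda_k= (\ominus \mathbf{1})^{k-1} \gamma_1\cdots \gamma_{k-1}\gamma ^{n-k} \enspace ,\] and $v^{(k)}$ satisfies $A^{(k)} v^{(k)}=\gamma v^{(k)}\ominus D^{(k)} v^{(k)}$. Moreover, if $v^{(k)}\in (\mathbb{S}_{\max}^\vee)^n$, $v^{(k)}$ is the unique $\mathbb{S}_{\max}$-eigenvector associated to the eigenvalue $\gamma$ (up to a multiplicative factor).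
   Context: $\mathbb{S}_{\max}$ is the symmetrized tropical semiring over a divisible totally ordered abelian group, with zero $\mathbf{0}$, unit $\mathbf{1}$, minus $\ominus$; $\mathbb{S}_{\max}^\vee$ is the set of signed elements; $a\,\nabla\, b$ iff $a\ominus b$ is balanced; $a\preceq b$ iff $b=a\oplus b$. $A\in{\operatorname{\mathsf{TPD}}}_n(\mathbb{S}_{\max}^\vee)$: $A$ symmetric with signed entries, $\mathbf{0}<a_{ii}$ and $a_{ij}^2<a_{ii}a_{jj}$ for $i\ne j$ (where $a<b$ iff $b\ominus a$ is positive). The $\mathbb{S}_{\max}$-eigenvalues of $A$ are its diagonal entries, and $\gamma_k$ is simple iff $\gamma_{k-1}\succ\gamma_k\succ\gamma_{k+1}$ (convention $\gamma_{n+1}=\mathbf{0}$). $(M^{\mathrm{adj}})_{ij}=(\ominus\mathbf{1})^{i+j}\det M[\hat j,\hat i]$ with the signed determinant; $M_{:,j}$ is the $j$-th column; $M^*=\bigoplus_{k\ge0}M^k$ is the Kleene star. An $\mathbb{S}_{\max}$-eigenvector for $\gamma$ is $v\in(\mathbb{S}_{\max}^\vee)^n\setminus\{\mathbf{0}\}$ with $Av\,\nabla\,\gamma v$. *)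

theory Defs
  imports "HOL-Combinatorics.Combinatorics"
begin

text \<open>Elements of S_max: the zero, and for every modulus g of the group a positive
  element (SP), a negative element (SN, i.e. minus the positive one) and a balanced
  element (SB, the balanced element with modulus g).\<close>

datatype sgn = SP | SN | SB

datatype 'g smax = Zero | Nz sgn 'g

definition sadd :: "sgn \<Rightarrow> sgn \<Rightarrow> sgn" where
  "sadd s t = (if s = t then s else SB)"

fun smul :: "sgn \<Rightarrow> sgn \<Rightarrow> sgn" where
  "smul SB t = SB"
| "smul s SB = SB"
| "smul SP t = t"
| "smul SN SP = SN"
| "smul SN SN = SP"

fun sneg :: "sgn \<Rightarrow> sgn" where
  "sneg SP = SN" | "sneg SN = SP" | "sneg SB = SB"

instantiation smax :: (linordered_ab_group_add) comm_semiring_1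
begin

definition zero_smax :: "'a smax" where "zero_smax = Zero"
definition one_smax :: "'a smax" where "one_smax = Nz SP 0"

fun plus_smax :: "'a smax \<Rightarrow> 'a smax \<Rightarrow> 'a smax" where
  "plus_smax Zero y = y"
| "plus_smax x Zero = x"
| "plus_smax (Nz s a) (Nz t b) =
     (if a < b then Nz t b else if b < a then Nz s a else Nz (sadd s t) a)"

fun times_smax :: "'a smax \<Rightarrow> 'a smax \<Rightarrow> 'a smax" where
  "times_smax Zero y = Zero"
| "times_smax x Zero = Zero"
| "times_smax (Nz s a) (Nz t b) = Nz (smul s t) (a + b)"

lemma plus_Zero2[simp]: "(x::'a smax) + Zero = x" by (cases x) auto
lemma times_Zero2[simp]: "(x::'a smax) * Zero = Zero" by (cases x) auto

lemma sadd_ac: "sadd s t = sadd t s" "sadd (sadd s t) u = sadd s (sadd t u)" "sadd s s = s"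
  by (auto simp: sadd_def)

lemma smul_ac: "smul s t = smul t s" "smul (smul s t) u = smul s (smul t u)" "smul SP s = s"
  by (cases s; cases t; cases u; simp)+

lemma smul_SP2[simp]: "smul s SP = s" by (cases s) auto

lemma smul_SB2[simp]: "smul s SB = SB" by (cases s) auto

lemma sadd_smul: "smul (sadd t u) s = sadd (smul t s) (smul u s)"
  by (cases s; cases t; cases u; simp add: sadd_def)

lemma smul_sadd: "smul s (sadd t u) = sadd (smul s t) (smul s u)"
  by (cases s; cases t; cases u; simp add: sadd_def)

instance
proof
  fix a b c :: "'a smax"
  show "a + b + c = a + (b + c)"
    by (cases a; cases b; cases c) (auto simp: sadd_def)
  show "a + b = b + a"
    by (cases a; cases b) (auto simp: sadd_ac)
  show "0 + a = a" by (simp add: zero_smax_def)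
  show "a * b * c = a * (b * c)"
    by (cases a; cases b; cases c) (auto simp: add.assoc smul_ac(2))
  show "a * b = b * a"
    by (cases a; cases b) (auto simp: smul_ac add.commute)
  show "1 * a = a" by (cases a) (auto simp: one_smax_def smul_ac)
  show "(a + b) * c = a * c + b * c"
    by (cases a; cases b; cases c) (auto simp: sadd_smul)
  show "0 * a = 0" by (simp add: zero_smax_def)
  show "a * 0 = 0" by (simp add: zero_smax_def)
  show "(0::'a smax) \<noteq> 1" by (simp add: zero_smax_def one_smax_def)
qed
end


text \<open>Minus (the symmetry): swaps positive and negative elements. Note a - b = a + (-b),
  i.e. the paper's a \<ominus> b; it is NOT a group inverse (a - a is balanced).\<close>

instantiation smax :: (linordered_ab_group_add) uminus
begin
fun uminus_smax :: "'a smax \<Rightarrow> 'a smax" where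
  "uminus_smax Zero = Zero"
| "uminus_smax (Nz s a) = Nz (sneg s) a"
instance ..
end

instantiation smax :: (linordered_ab_group_add) minus
begin
definition minus_smax :: "'a smax \<Rightarrow> 'a smax \<Rightarrow> 'a smax" where
  "minus_smax a b = a + (- b)"
instance ..
end

definition divisible_group :: "'g::linordered_ab_group_add itself \<Rightarrow> bool" where
  "divisible_group _ = (\<forall>x::'g. \<forall>m::nat. 0 < m \<longrightarrow> (\<exists>y. (\<Sum>i<m. y) = x))"

definition balanced :: "'g::linordered_ab_group_add smax \<Rightarrow> bool" where
  "balanced x = (x = 0 \<or> (\<exists>g. x = Nz SB g))"

definition signed :: "'g::linordered_ab_group_add smax \<Rightarrow> bool" where
  "signed x = (\<forall>g. x \<noteq> Nz SB g)"

definition nabla :: "'g::linordered_ab_group_add smax \<Rightarrow> 'g smax \<Rightarrow> bool" (infix "\<nabla>" 50) where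
  "a \<nabla> b = balanced (a - b)"

definition spreceq :: "'g::linordered_ab_group_add smax \<Rightarrow> 'g smax \<Rightarrow> bool" (infix "\<preceq>" 50) where
  "a \<preceq> b = (b = a + b)"

definition ssucc :: "'g::linordered_ab_group_add smax \<Rightarrow> 'g smax \<Rightarrow> bool" (infix "\<succ>" 50) where
  "a \<succ> b = (b \<preceq> a \<and> a \<noteq> b)"

definition spositive :: "'g::linordered_ab_group_add smax \<Rightarrow> bool" where
  "spositive x = (\<exists>g. x = Nz SP g)"

definition slt :: "'g::linordered_ab_group_add smax \<Rightarrow> 'g smax \<Rightarrow> bool" where
  "slt a b = spositive (b - a)"

section \<open>Matrices and vectors (indices 1..n)\<close>

type_synonym 'g smat = "nat \<Rightarrow> nat \<Rightarrow> 'g smax"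
type_synonym 'g svec = "nat \<Rightarrow> 'g smax"

definition idm :: "'g::linordered_ab_group_add smat" where
  "idm = (\<lambda>i j. if i = j then 1 else 0)"

definition mmul :: "nat \<Rightarrow> 'g::linordered_ab_group_add smat \<Rightarrow> 'g smat \<Rightarrow> 'g smat" where
  "mmul n A B = (\<lambda>i j. \<Sum>l=1..n. A i l * B l j)"

definition mvmul :: "nat \<Rightarrow> 'g::linordered_ab_group_add smat \<Rightarrow> 'g svec \<Rightarrow> 'g svec" where
  "mvmul n A v = (\<lambda>i. \<Sum>j=1..n. A i j * v j)"

fun mpow :: "nat \<Rightarrow> 'g::linordered_ab_group_add smat \<Rightarrow> nat \<Rightarrow> 'g smat" where
  "mpow n A 0 = idm"
| "mpow n A (Suc m) = mmul n (mpow n A m) A"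

definition kstar :: "nat \<Rightarrow> 'g::linordered_ab_group_add smat \<Rightarrow> 'g smat" where
  "kstar n M = (\<lambda>i j. THE s. \<exists>N. \<forall>m\<ge>N. (\<Sum>p\<le>m. mpow n M p i j) = s)"

definition mat_inv :: "nat \<Rightarrow> 'g::linordered_ab_group_add smat \<Rightarrow> 'g smat" where
  "mat_inv n M = (THE X. (\<forall>i j. \<not> (i \<in> {1..n} \<and> j \<in> {1..n}) \<longrightarrow> X i j = 0) \<and>
      (\<forall>i\<in>{1..n}. \<forall>j\<in>{1..n}. mmul n M X i j = idm i j \<and> mmul n X M i j = idm i j))"

definition ssign :: "(nat \<Rightarrow> nat) \<Rightarrow> 'g::linordered_ab_group_add smax" where
  "ssign \<sigma> = (if evenperm \<sigma> then 1 else - 1)"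

definition sdet :: "nat \<Rightarrow> 'g::linordered_ab_group_add smat \<Rightarrow> 'g smax" where
  "sdet n M = (\<Sum>\<sigma>\<in>{\<sigma>. \<sigma> permutes {1..n}}. ssign \<sigma> * (\<Prod>i=1..n. M i (\<sigma> i)))"

definition minor :: "nat \<Rightarrow> nat \<Rightarrow> 'g::linordered_ab_group_add smat \<Rightarrow> 'g smat" where
  "minor j i M = (\<lambda>r c. M (if r < j then r else Suc r) (if c < i then c else Suc c))"

definition adj :: "nat \<Rightarrow> 'g::linordered_ab_group_add smat \<Rightarrow> 'g smat" where
  "adj n M = (\<lambda>i j. (- 1) ^ (i + j) * sdet (n - 1) (minor j i M))"

definition TPD :: "nat \<Rightarrow> 'g::linordered_ab_group_add smat \<Rightarrow> bool" where
  "TPD n A = ((\<forall>i\<in>{1..n}. \<forall>j\<in>{1..n}. A i j = A j i \<and> signed (A i j)) \<and>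
     (\<forall>i\<in>{1..n}. slt 0 (A i i)) \<and>
     (\<forall>i\<in>{1..n}. \<forall>j\<in>{1..n}. i \<noteq> j \<longrightarrow> slt ((A i j)^2) (A i i * A j j)))"

definition gam :: "nat \<Rightarrow> 'g::linordered_ab_group_add smat \<Rightarrow> nat \<Rightarrow> 'g smax" where
  "gam n A i = (if i \<le> n then A i i else 0)"

definition simple_eig :: "nat \<Rightarrow> 'g::linordered_ab_group_add smat \<Rightarrow> nat \<Rightarrow> bool" where
  "simple_eig n A k = ((1 < k \<longrightarrow> gam n A (k - 1) \<succ> gam n A k) \<and> gam n A k \<succ> gam n A (Suc k))"

definition eigvec :: "nat \<Rightarrow> 'g::linordered_ab_group_add smat \<Rightarrow> 'g smax \<Rightarrow> 'g svec \<Rightarrow> bool" where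
  "eigvec n A \<gamma> v = ((\<forall>i\<in>{1..n}. signed (v i)) \<and> (\<exists>i\<in>{1..n}. v i \<noteq> 0) \<and>
     (\<forall>i\<in>{1..n}. mvmul n A v i \<nabla> \<gamma> * v i))"

definition Dk :: "'g::linordered_ab_group_add smat \<Rightarrow> nat \<Rightarrow> 'g smat" where
  "Dk A k = (\<lambda>i j. if i = j \<and> i < k then A i i else 0)"

definition Ak :: "'g::linordered_ab_group_add smat \<Rightarrow> nat \<Rightarrow> 'g smat" where
  "Ak A k = (\<lambda>i j. if i \<noteq> j \<or> k \<le> i then A i j else 0)"

end

theory Submission
  imports Defs
begin

(*
  Write |x| for the modulus of x, an element of the ordered group.  Dividing row i of A^(k)
  by the i-th diagonal entry of gamma I - D^(k) gives the matrix M whose Kleene star occurs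
  in the theorem.  The moduli c_i of these diagonal entries form a potential for M:
  2 |M_ij| + c_i < c_j for every nonzero entry except M_kk = 1.  This is where positive
  definiteness and the simplicity of gamma are used.  Hence closed walks have weight at most 1,
  and column k of M^* is the sum of the weights of the elementary paths ending in k.

  Expanding the adjugate column over the permutations pi with pi k = i, each term is
  dominated by the term of the cycle through k contained in pi, and the cycle along an
  elementary path P contributes lambda_k times the weight of P.  The equation for
  A^(k) v^(k) is then the fixpoint equation of the path sums.

  An eigenvector w satisfies w_i \<nabla> sum_{j <> i} M_ij w_j for i <> k.  At an index of
  maximal potential among those where w and the rescaled v^(k) differ, the differing terms
  are negligible, which forces equality.
*)

section \<open>Arithmetic in the symmetrized tropical semiring\<close>

lemma zero_smax_eq_Zero: "(0::'g::linordered_ab_group_add smax) = Zero"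
  by (simp add: zero_smax_def)

lemma one_smax_eq: "(1::'g::linordered_ab_group_add smax) = Nz SP 0"
  by (simp add: one_smax_def)

lemmas smax_unfold_0_1 = zero_smax_eq_Zero one_smax_eq

lemma add_idem_smax [simp]: "(x::'g::linordered_ab_group_add smax) + x = x"
  by (cases x) (auto simp: sadd_def)

lemma minus_minus_smax [simp]: "- (- (x::'g::linordered_ab_group_add smax)) = x"
proof (cases x)
  case (Nz s a)
  then show ?thesis by (cases s) auto
qed simp

lemma minus_zero_smax [simp]: "- (0::'g::linordered_ab_group_add smax) = 0"
  by (simp add: smax_unfold_0_1)

lemma minus_eq_zero_smax_iff [simp]: "- (x::'g::linordered_ab_group_add smax) = 0 \<longleftrightarrow> x = 0"
  by (cases x) (auto simp: smax_unfold_0_1)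

lemma smul_sneg_left: "smul (sneg s) t = sneg (smul s t)"
  by (cases s; cases t) auto

lemma minus_mult_left_smax: "- (x::'g::linordered_ab_group_add smax) * y = - (x * y)"
  by (cases x; cases y) (auto simp: smul_sneg_left)

lemma minus_mult_right_smax: "(x::'g::linordered_ab_group_add smax) * - y = - (x * y)"
  by (metis minus_mult_left_smax mult.commute)

lemma minus_mult_minus_smax: "- (x::'g::linordered_ab_group_add smax) * - y = x * y"
  by (simp add: minus_mult_left_smax minus_mult_right_smax)

lemma minus_add_smax: "- ((x::'g::linordered_ab_group_add smax) + y) = - x + - y"
  by (cases x; cases y) (auto simp: sadd_def elim!: sneg.elims)

lemma minus_one_mult_smax: "- 1 * (x::'g::linordered_ab_group_add smax) = - x"
  by (simp add: minus_mult_left_smax)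

lemma minus_one_power_smax:
  "(- 1::'g::linordered_ab_group_add smax) ^ m = (if even m then 1 else - 1)"
  by (induction m) (auto simp: minus_one_mult_smax)

text \<open>\<open>modulus 0 = 0\<close> is a junk value; it only matters together with a test for zero.\<close>

fun modulus :: "'g::linordered_ab_group_add smax \<Rightarrow> 'g" where
  "modulus Zero = 0"
| "modulus (Nz s a) = a"

lemma modulus_minus [simp]: "modulus (- (x::'g::linordered_ab_group_add smax)) = modulus x"
  by (cases x) auto

lemma modulus_one [simp]: "modulus (1::'g::linordered_ab_group_add smax) = 0"
  by (simp add: one_smax_eq)

lemma mult_eq_0_iff_smax: "(x::'g::linordered_ab_group_add smax) * y = 0 \<longleftrightarrow> x = 0 \<or> y = 0"
  by (cases x; cases y) (auto simp: smax_unfold_0_1)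

lemma modulus_mult:
  "(x::'g::linordered_ab_group_add smax) \<noteq> 0 \<Longrightarrow> y \<noteq> 0 \<Longrightarrow> modulus (x * y) = modulus x + modulus y"
  by (cases x; cases y) (auto simp: smax_unfold_0_1)

lemma prod_nonzero_smax:
  fixes f :: "'a \<Rightarrow> 'g::linordered_ab_group_add smax"
  assumes "finite X" "\<forall>x\<in>X. f x \<noteq> 0"
  shows "prod f X \<noteq> 0 \<and> modulus (prod f X) = (\<Sum>x\<in>X. modulus (f x))"
  using assms
  by (induction X rule: finite_induct) (auto simp: mult_eq_0_iff_smax modulus_mult)

lemma sum_eq_single:
  fixes f :: "'a \<Rightarrow> 'b::comm_monoid_add"
  assumes "finite A" "a \<in> A" "\<And>x. x \<in> A \<Longrightarrow> x \<noteq> a \<Longrightarrow> f x = 0"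
  shows "sum f A = f a"
  using assms by (subst sum.mono_neutral_right[of A "{a}"]) auto

lemma finite_obtain_max:
  fixes f :: "'a \<Rightarrow> 'b::linorder"
  assumes "finite D" "D \<noteq> {}"
  obtains i where "i \<in> D" "\<And>j. j \<in> D \<Longrightarrow> f j \<le> f i"
proof -
  have "Max (f ` D) \<in> f ` D" using assms by simp
  then obtain i where i: "Max (f ` D) = f i" "i \<in> D" by (rule imageE)
  show thesis by (rule that[OF i(2)]) (use assms(1) in \<open>simp flip: i(1)\<close>)
qed

lemma less_of_double_less: "(a::'g::linordered_ab_group_add) + a < b + b \<Longrightarrow> a < b"
  by (meson add_mono not_less)

lemma spreceq_refl [simp]: "(x::'g::linordered_ab_group_add smax) \<preceq> x"
  by (simp add: spreceq_def)

lemma spreceq_trans: "(x::'g::linordered_ab_group_add smax) \<preceq> y \<Longrightarrow> y \<preceq> z \<Longrightarrow> x \<preceq> z"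
  unfolding spreceq_def by (metis add.assoc)

lemma spreceq_add_right: "(x::'g::linordered_ab_group_add smax) \<preceq> x + y"
  unfolding spreceq_def by (metis add.assoc add_idem_smax)

lemma add_spreceq: "(x::'g::linordered_ab_group_add smax) \<preceq> z \<Longrightarrow> y \<preceq> z \<Longrightarrow> x + y \<preceq> z"
  unfolding spreceq_def by (metis add.assoc)

lemma spreceq_mult_right: "(x::'g::linordered_ab_group_add smax) \<preceq> y \<Longrightarrow> x * z \<preceq> y * z"
  unfolding spreceq_def by (metis distrib_right)

lemma zero_spreceq [simp]: "0 \<preceq> (x::'g::linordered_ab_group_add smax)"
  by (simp add: spreceq_def smax_unfold_0_1)

lemma spreceq_if_modulus_less:
  "(y::'g::linordered_ab_group_add smax) \<noteq> 0 \<Longrightarrow> x \<noteq> 0 \<Longrightarrow> modulus x < modulus y \<Longrightarrow> x \<preceq> y"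
  by (cases x; cases y) (auto simp: spreceq_def smax_unfold_0_1)

lemma Nz_SP_spreceq_iff: "Nz SP a \<preceq> Nz SP b \<longleftrightarrow> a \<le> (b::'g::linordered_ab_group_add)"
  unfolding spreceq_def by (auto simp: sadd_def)

lemma Nz_SP_ssucc_iff: "Nz SP a \<succ> Nz SP b \<longleftrightarrow> b < (a::'g::linordered_ab_group_add)"
  unfolding ssucc_def spreceq_def by auto

lemma sum_spreceq:
  "finite X \<Longrightarrow> \<forall>x\<in>X. f x \<preceq> z \<Longrightarrow> (\<Sum>x\<in>X. f x) \<preceq> (z::'g::linordered_ab_group_add smax)"
  by (induction X rule: finite_induct) (simp_all add: add_spreceq)

lemma member_spreceq_sum:
  "finite X \<Longrightarrow> x \<in> X \<Longrightarrow> f x \<preceq> (\<Sum>x\<in>X. f x :: 'g::linordered_ab_group_add smax)"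
  by (metis spreceq_add_right sum.remove)

lemma spreceq_antisym: "(x::'g::linordered_ab_group_add smax) \<preceq> y \<Longrightarrow> y \<preceq> x \<Longrightarrow> x = y"
  unfolding spreceq_def by (metis add.commute)

lemma sum_spreceq_sum:
  fixes f :: "'a \<Rightarrow> 'g::linordered_ab_group_add smax" and g :: "'b \<Rightarrow> 'g smax"
  assumes "finite S" "finite T" "\<forall>s\<in>S. \<exists>t\<in>T. f s \<preceq> g t"
  shows "(\<Sum>s\<in>S. f s) \<preceq> (\<Sum>t\<in>T. g t)"
  using assms member_spreceq_sum[OF assms(2), of _ g] by (meson spreceq_trans sum_spreceq)

text \<open>Tropical addition is idempotent: a sum is determined by its dominant terms.\<close>

lemma sum_eq_sum_if_dominated:
  fixes f :: "'a \<Rightarrow> 'g::linordered_ab_group_add smax" and g :: "'b \<Rightarrow> 'g smax"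
  assumes "finite S" "finite T" "\<forall>s\<in>S. \<exists>t\<in>T. f s \<preceq> g t" "\<forall>t\<in>T. \<exists>s\<in>S. g t \<preceq> f s"
  shows "(\<Sum>s\<in>S. f s) = (\<Sum>t\<in>T. g t)"
  using assms by (intro spreceq_antisym sum_spreceq_sum)

lemma balanced_add_minus: "balanced (x + - (x::'g::linordered_ab_group_add smax))"
proof (cases x)
  case (Nz s a)
  then show ?thesis unfolding balanced_def by (cases s) (auto simp: sadd_def)
qed (simp add: balanced_def smax_unfold_0_1)

lemma balanced_add:
  "balanced a \<Longrightarrow> balanced b \<Longrightarrow> balanced (a + (b::'g::linordered_ab_group_add smax))"
  unfolding balanced_def by (auto simp: smax_unfold_0_1 sadd_def split: if_splits)

lemma balanced_mult: "balanced a \<Longrightarrow> balanced (c * (a::'g::linordered_ab_group_add smax))"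
  unfolding balanced_def by (cases c) (auto simp: smax_unfold_0_1)

lemma smul_eq_SB_iff: "smul s t = SB \<longleftrightarrow> s = SB \<or> t = SB"
  by (cases s; cases t) auto

lemma sneg_eq_SB_iff: "sneg s = SB \<longleftrightarrow> s = SB"
  by (cases s) auto

lemma signed_mult:
  "signed a \<Longrightarrow> signed b \<Longrightarrow> signed (a * (b::'g::linordered_ab_group_add smax))"
  unfolding signed_def by (cases a; cases b) (auto simp: smul_eq_SB_iff)

lemma signed_prod:
  "finite X \<Longrightarrow> \<forall>x\<in>X. signed (f x) \<Longrightarrow> signed (\<Prod>x\<in>X. f x :: 'g::linordered_ab_group_add smax)"
  by (induction X rule: finite_induct) (simp_all add: signed_mult, simp add: signed_def one_smax_eq)

lemma signed_invertible:
  assumes "signed a" "a \<noteq> 0"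
  obtains b where "b * a = (1::'g::linordered_ab_group_add smax)" "signed b"
proof -
  obtain s u where a: "a = Nz s u" "s \<noteq> SB"
    using assms unfolding signed_def by (cases a) (auto simp: smax_unfold_0_1)
  then have "Nz s (- u) * a = 1" "signed (Nz s (- u))"
    unfolding signed_def by (cases s; simp add: one_smax_eq)+
  then show ?thesis using that by blast
qed

lemma nabla_signed_imp_eq:
  assumes "signed a" "signed b" "a \<nabla> b"
  shows "a = (b::'g::linordered_ab_group_add smax)"
proof (cases a; cases b)
  fix s x t y assume "a = Nz s x" "b = Nz t y"
  then show ?thesis using assms unfolding nabla_def balanced_def signed_def minus_smax_def
    by (cases s; cases t) (auto simp: smax_unfold_0_1 sadd_def split: if_splits)
qed (use assms in \<open>auto simp: nabla_def balanced_def signed_def minus_smax_def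
    smax_unfold_0_1 sneg_eq_SB_iff\<close>)

definition negligible :: "'g::linordered_ab_group_add \<Rightarrow> 'g smax \<Rightarrow> bool" where
  "negligible c z \<longleftrightarrow> z = 0 \<or> modulus z < c"

lemma negligible_add: "negligible c a \<Longrightarrow> negligible c b \<Longrightarrow> negligible c (a + b)"
  unfolding negligible_def by (cases a; cases b) (auto simp: smax_unfold_0_1 sadd_def)

lemma negligible_sum: "finite S \<Longrightarrow> \<forall>j\<in>S. negligible c (f j) \<Longrightarrow> negligible c (\<Sum>j\<in>S. f j)"
  by (induction S rule: finite_induct) (simp_all add: negligible_add, simp add: negligible_def)

lemma negligible_add_cancel:
  "negligible c (a + b) \<Longrightarrow> negligible c b \<Longrightarrow> negligible c (a::'g::linordered_ab_group_add smax)"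
  unfolding negligible_def by (cases a; cases b) (auto simp: smax_unfold_0_1 sadd_def split: if_splits)

lemma add_negligible_eq:
  "y \<noteq> 0 \<Longrightarrow> negligible (modulus y) z \<Longrightarrow> y + z = (y::'g::linordered_ab_group_add smax)"
  unfolding negligible_def by (cases y; cases z) (auto simp: smax_unfold_0_1)

lemma eq_of_add_negligible:
  "y = x + z \<Longrightarrow> y \<noteq> 0 \<Longrightarrow> negligible (modulus y) z \<Longrightarrow> x = (y::'g::linordered_ab_group_add smax)"
  unfolding negligible_def
  by (cases y; cases z; cases x) (auto simp: smax_unfold_0_1 sadd_def split: if_splits)

lemma not_nabla_negligible:
  assumes "signed x" "x \<noteq> 0" "negligible (modulus x) z"
  shows "\<not> x \<nabla> (z::'g::linordered_ab_group_add smax)"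
proof
  have "negligible (modulus x) (- z)"
    using assms(3) unfolding negligible_def by auto
  then have "x - z = x"
    unfolding minus_smax_def using add_negligible_eq[OF assms(2)] by blast
  moreover assume "x \<nabla> z"
  ultimately show False using assms(1,2) unfolding nabla_def balanced_def signed_def by auto
qed

definition max_modulus :: "'g::linordered_ab_group_add smax \<Rightarrow> 'g smax \<Rightarrow> 'g" where
  "max_modulus a b =
    (if a = 0 then modulus b else if b = 0 then modulus a else max (modulus a) (modulus b))"

lemma modulus_le_max_modulus:
  "a \<noteq> 0 \<Longrightarrow> modulus a \<le> max_modulus a b" "b \<noteq> 0 \<Longrightarrow> modulus b \<le> max_modulus a b"
  unfolding max_modulus_def by auto

lemma signed_eq_of_common_dominant_part:
  fixes a b p q q' :: "'g::linordered_ab_group_add smax"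
  assumes "signed a" "signed b" "a \<nabla> p + q" "b = p + q'"
    and q: "negligible (max_modulus a b) q" "negligible (max_modulus a b) q'"
  shows "a = b"
proof -
  define \<delta> where "\<delta> = max_modulus a b"
  consider "a = 0" "b = 0" | "b \<noteq> 0" "modulus b = \<delta>" | "a \<noteq> 0" "modulus a = \<delta>" "negligible \<delta> b"
  proof (cases "b \<noteq> 0 \<and> modulus b = \<delta>")
    case False
    then have "a = 0 \<and> b = 0 \<or> a \<noteq> 0 \<and> modulus a = \<delta> \<and> negligible \<delta> b"
      unfolding \<delta>_def max_modulus_def negligible_def by (auto simp: max_def split: if_splits)
    then show ?thesis using that by blast
  qed (use that in blast)
  then show ?thesis
  proof cases
    case 2
    then have "p + q = b"
      using eq_of_add_negligible[OF assms(4)] add_negligible_eq[of b q] q unfolding \<delta>_def by simp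
    then show "a = b" using nabla_signed_imp_eq assms(1-3) by simp
  next
    case 3
    then have "negligible \<delta> p" using negligible_add_cancel assms(4) q(2) unfolding \<delta>_def by blast
    then have "negligible (modulus a) (p + q)" using 3 q(1) negligible_add unfolding \<delta>_def by simp
    then show "a = b" using not_nabla_negligible assms(1,3) 3 by blast
  qed simp
qed

section \<open>Walk weights and matrix powers\<close>

fun walk_weight :: "'g::linordered_ab_group_add smat \<Rightarrow> nat list \<Rightarrow> 'g smax" where
  "walk_weight X [] = 1"
| "walk_weight X [x] = 1"
| "walk_weight X (x # y # zs) = X x y * walk_weight X (y # zs)"

lemma walk_weight_append:
  "walk_weight X (xs @ y # ys) = walk_weight X (xs @ [y]) * walk_weight X (y # ys)"
proof (induction xs)
  case (Cons a xs)
  then show ?case by (cases xs) (auto simp: mult.assoc)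
qed simp

lemma walk_weight_snoc:
  "xs \<noteq> [] \<Longrightarrow> walk_weight X (xs @ [y]) = walk_weight X xs * X (last xs) y"
proof (induction xs)
  case (Cons a xs)
  then show ?case by (cases xs) (auto simp: mult.assoc)
qed simp

lemma walk_weight_cong:
  "set w \<subseteq> {1..n} \<Longrightarrow> \<forall>a\<in>{1..n}. \<forall>b\<in>{1..n}. X a b = Y a b \<Longrightarrow> walk_weight X w = walk_weight Y w"
  by (induction X w rule: walk_weight.induct) auto

definition walks :: "nat \<Rightarrow> nat \<Rightarrow> nat \<Rightarrow> nat \<Rightarrow> nat list set" where
  "walks n p i j = {w. length w = Suc p \<and> hd w = i \<and> last w = j \<and> set w \<subseteq> {1..n}}"

lemma finite_walks: "finite (walks n p i j)"
proof -
  have "walks n p i j \<subseteq> {w. set w \<subseteq> {1..n} \<and> length w = Suc p}"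
    unfolding walks_def by auto
  then show ?thesis using finite_lists_length_eq[of "{1..n}" "Suc p"] finite_subset by blast
qed

lemma walks_0: "walks n 0 i j = (if i = j \<and> i \<in> {1..n} then {[i]} else {})"
  unfolding walks_def by (auto simp: length_Suc_conv)

lemma walks_Suc:
  assumes "j \<in> {1..n}"
  shows "walks n (Suc p) i j = (\<lambda>w. w @ [j]) ` (\<Union>l\<in>{1..n}. walks n p i l)"
proof (intro set_eqI iffI)
  fix w assume w: "w \<in> walks n (Suc p) i j"
  then have "w \<noteq> []" "last w = j" "length (butlast w) = Suc p" unfolding walks_def by auto
  then obtain u where u: "w = u @ [j]" "u \<noteq> []"
    by (metis append_butlast_last_id length_0_conv nat.distinct(1))
  moreover have su: "set u \<subseteq> {1..n}" using w u unfolding walks_def by auto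
  ultimately have "u \<in> walks n p i (last u)" using w unfolding walks_def by auto
  moreover have "last u \<in> {1..n}" using su last_in_set[OF u(2)] by blast
  ultimately show "w \<in> (\<lambda>w. w @ [j]) ` (\<Union>l\<in>{1..n}. walks n p i l)" using u by blast
next
  fix w assume "w \<in> (\<lambda>w. w @ [j]) ` (\<Union>l\<in>{1..n}. walks n p i l)"
  then obtain u l where "w = u @ [j]" "u \<in> walks n p i l"
    by blast
  moreover have "u \<noteq> []" using \<open>u \<in> walks n p i l\<close> unfolding walks_def by auto
  ultimately show "w \<in> walks n (Suc p) i j" using assms unfolding walks_def by (simp add: hd_append)
qed

lemma mpow_eq_sum_walks:
  assumes "i \<in> {1..n}" "j \<in> {1..n}"
  shows "mpow n X p i j = (\<Sum>w\<in>walks n p i j. walk_weight X w)"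
  using assms(2)
proof (induction p arbitrary: j)
  case 0
  then show ?case using assms(1) by (simp add: walks_0 idm_def)
next
  case (Suc p)
  have "mpow n X p i l * X l j = (\<Sum>w\<in>walks n p i l. walk_weight X (w @ [j]))"
    if "l \<in> {1..n}" for l
    unfolding Suc.IH[OF that] sum_distrib_right
    by (intro sum.cong refl) (subst walk_weight_snoc, auto simp: walks_def)
  then have "mpow n X (Suc p) i j = (\<Sum>l=1..n. \<Sum>w\<in>walks n p i l. walk_weight X (w @ [j]))"
    unfolding mpow.simps mmul_def by simp
  also have "\<dots> = (\<Sum>w\<in>(\<Union>l\<in>{1..n}. walks n p i l). walk_weight X (w @ [j]))"
    by (rule sum.UNION_disjoint[symmetric]) (simp, simp add: finite_walks, auto simp: walks_def)
  also have "\<dots> = (\<Sum>w\<in>walks n (Suc p) i j. walk_weight X w)"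
    unfolding walks_Suc[OF Suc.prems] by (rule sum.reindex[symmetric, unfolded comp_def]) (auto intro: inj_onI)
  finally show ?case .
qed

lemma sum_mpow_eq_sum_walks:
  assumes "i \<in> {1..n}" "j \<in> {1..n}"
  shows "(\<Sum>p\<le>m. mpow n X p i j) = (\<Sum>w\<in>(\<Union>p\<le>m. walks n p i j). walk_weight X w)"
proof -
  have "(\<Sum>p\<le>m. mpow n X p i j) = (\<Sum>p\<le>m. \<Sum>w\<in>walks n p i j. walk_weight X w)"
    by (intro sum.cong refl mpow_eq_sum_walks[OF assms])
  also have "\<dots> = (\<Sum>w\<in>(\<Union>p\<le>m. walks n p i j). walk_weight X w)"
    by (rule sum.UNION_disjoint[symmetric]) (simp, simp add: finite_walks, auto simp: walks_def)
  finally show ?thesis .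
qed

lemma kstar_eqI:
  assumes "\<And>m. N \<le> m \<Longrightarrow> (\<Sum>p\<le>m. mpow n X p i j) = s"
  shows "kstar n X i j = s"
  unfolding kstar_def
proof (rule the_equality)
  fix s' assume "\<exists>N'. \<forall>m\<ge>N'. (\<Sum>p\<le>m. mpow n X p i j) = s'"
  then obtain N' where "\<forall>m\<ge>N'. (\<Sum>p\<le>m. mpow n X p i j) = s'" by blast
  then show "s' = s" using assms[of "max N N'"] by simp
qed (use assms in blast)

section \<open>Signs of permutations and the adjugate\<close>

lemma ssign_comp:
  "permutation p \<Longrightarrow> permutation q \<Longrightarrow>
    (ssign (p \<circ> q) :: 'g::linordered_ab_group_add smax) = ssign p * ssign q"
  unfolding ssign_def by (auto simp: evenperm_comp minus_one_mult_smax)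

lemma ssign_inv: "permutation p \<Longrightarrow> ssign (inv p) = ssign p"
  unfolding ssign_def by (simp add: evenperm_inv)

lemma ssign_transpose: "a \<noteq> b \<Longrightarrow> ssign (transpose a b) = - 1"
  unfolding ssign_def by (simp add: evenperm_swap)

lemma ssign_nonzero: "ssign p \<noteq> (0::'g::linordered_ab_group_add smax)"
  and modulus_ssign [simp]: "modulus (ssign p :: 'g smax) = 0"
  unfolding ssign_def by (auto simp: smax_unfold_0_1)

lemma evenperm_cycle_of_list:
  "distinct cs \<Longrightarrow> evenperm (cycle_of_list cs) \<longleftrightarrow> even (length cs - 1)"
proof (induction cs rule: cycle_of_list.induct)
  case (1 i j cs)
  then show ?case
    unfolding cycle_of_list.simps(1) evenperm_comp[OF permutation_swap_id permutation_of_cycle]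
    by (simp add: evenperm_swap)
qed simp_all

lemma ssign_cycle_of_list:
  "distinct cs \<Longrightarrow> ssign (cycle_of_list cs) = (- 1::'g::linordered_ab_group_add smax) ^ (length cs - 1)"
  unfolding ssign_def minus_one_power_smax by (simp add: evenperm_cycle_of_list)

lemma map_cycle_of_list: "distinct cs \<Longrightarrow> cs \<noteq> [] \<Longrightarrow> map (cycle_of_list cs) cs = tl cs @ [hd cs]"
  using cyclic_rotation[of cs 1] by (simp add: rotate1_hd_tl)

lemma cycle_of_list_nth:
  assumes "distinct cs" "Suc t < length cs"
  shows "cycle_of_list cs (cs ! t) = cs ! Suc t"
proof -
  have ne: "cs \<noteq> []" using assms(2) by auto
  have "cycle_of_list cs (cs ! t) = map (cycle_of_list cs) cs ! t"
    using assms(2) by simp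
  also have "\<dots> = (tl cs @ [hd cs]) ! t"
    by (subst map_cycle_of_list[OF assms(1) ne]) (rule refl)
  also have "\<dots> = cs ! Suc t"
    using assms(2) by (auto simp: nth_append nth_tl)
  finally show ?thesis .
qed

lemma cycle_of_list_last:
  assumes "distinct cs" "cs \<noteq> []"
  shows "cycle_of_list cs (last cs) = hd cs"
  using map_cycle_of_list[OF assms] assms(2) by (metis last_map last_snoc)

lemma cycle_of_list_upt:
  assumes "i \<le> n"
  shows "cycle_of_list [i..<Suc n] r = (if r < i \<or> n < r then r else if r = n then i else Suc r)"
proof -
  consider "r < i \<or> n < r" | "r = n" | "i \<le> r" "r < n" by linarith
  then show ?thesis
  proof cases
    case 1
    then show ?thesis by (auto intro: id_outside_supp)
  next
    case 2
    then show ?thesis using assms cycle_of_list_last[of "[i..<Suc n]"] by (simp del: upt_Suc)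
  next
    case 3
    then show ?thesis using cycle_of_list_nth[of "[i..<Suc n]" "r - i"] assms by (simp del: upt_Suc)
  qed
qed

lemma permutes_remove_iff: "\<sigma> permutes S - {a} \<longleftrightarrow> \<sigma> permutes S \<and> \<sigma> a = a"
proof
  assume \<sigma>: "\<sigma> permutes S - {a}"
  show "\<sigma> permutes S \<and> \<sigma> a = a"
    using permutes_subset[OF \<sigma> Diff_subset] permutes_not_in[OF \<sigma>] by simp
next
  assume h: "\<sigma> permutes S \<and> \<sigma> a = a"
  show "\<sigma> permutes S - {a}" by (rule permutes_superset[of \<sigma> S]) (use h in auto)
qed

lemma bij_betw_conj_permutes:
  assumes p: "p permutes S" and q: "q permutes S"
  shows "bij_betw (\<lambda>\<sigma>. p \<circ> \<sigma> \<circ> inv q) {\<sigma>. \<sigma> permutes S - {a}} {\<pi>. \<pi> permutes S \<and> \<pi> (q a) = p a}"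
proof (rule bij_betw_byWitness[where f' = "\<lambda>\<pi>. inv p \<circ> \<pi> \<circ> q"])
  have inv: "p \<circ> inv p = id" "inv p \<circ> p = id" "q \<circ> inv q = id" "inv q \<circ> q = id"
    using permutes_inv_o p q by blast+
  then show "\<forall>\<sigma>\<in>{\<sigma>. \<sigma> permutes S - {a}}. inv p \<circ> (p \<circ> \<sigma> \<circ> inv q) \<circ> q = \<sigma>"
    "\<forall>\<pi>\<in>{\<pi>. \<pi> permutes S \<and> \<pi> (q a) = p a}. p \<circ> (inv p \<circ> \<pi> \<circ> q) \<circ> inv q = \<pi>"
    by (simp_all add: comp_assoc, simp_all flip: comp_assoc)
  show "(\<lambda>\<sigma>. p \<circ> \<sigma> \<circ> inv q) ` {\<sigma>. \<sigma> permutes S - {a}} \<subseteq> {\<pi>. \<pi> permutes S \<and> \<pi> (q a) = p a}"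
    using p q by (auto simp: permutes_remove_iff permutes_inverses
        intro!: permutes_compose permutes_inv)
  show "(\<lambda>\<pi>. inv p \<circ> \<pi> \<circ> q) ` {\<pi>. \<pi> permutes S \<and> \<pi> (q a) = p a} \<subseteq> {\<sigma>. \<sigma> permutes S - {a}}"
    using p q by (auto simp: permutes_remove_iff permutes_inverses
        intro!: permutes_compose permutes_inv)
qed

definition shift_cycle :: "nat \<Rightarrow> nat \<Rightarrow> nat \<Rightarrow> nat" where
  "shift_cycle n i = cycle_of_list [i..<Suc n]"

lemma shift_cycle_apply:
  "i \<le> n \<Longrightarrow> shift_cycle n i r = (if r < i \<or> n < r then r else if r = n then i else Suc r)"
  unfolding shift_cycle_def by (rule cycle_of_list_upt)

lemma shift_cycle_permutes: "1 \<le> i \<Longrightarrow> shift_cycle n i permutes {1..n}"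
  unfolding shift_cycle_def
  by (rule permutes_subset[OF cycle_permutes]) auto

lemma ssign_shift_cycle: "ssign (shift_cycle n i) = (- 1::'g::linordered_ab_group_add smax) ^ (n - i)"
  unfolding shift_cycle_def by (simp add: ssign_cycle_of_list del: upt_Suc)

lemma minor_eq_shift_cycle:
  "i \<le> n \<Longrightarrow> j \<le> n \<Longrightarrow> r < n \<Longrightarrow> c < n \<Longrightarrow>
    minor j i M r c = M (shift_cycle n j r) (shift_cycle n i c)"
  unfolding minor_def by (simp add: shift_cycle_apply)

text \<open>Laplace-type expansion: conjugating by the shift cycles turns the permutations of
  the minor into the permutations of \<open>{1..n}\<close> sending \<open>k\<close> to \<open>i\<close>, with the same terms.\<close>

lemma conj_shift_cycle_term_eq_walk_weight:
  fixes B :: "'g::linordered_ab_group_add smat"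
  assumes i: "i \<in> {1..n}" and k: "k \<in> {1..n}" and \<sigma>: "\<sigma> permutes {1..n-1}"
  defines "\<pi> \<equiv> shift_cycle n i \<circ> \<sigma> \<circ> inv (shift_cycle n k)"
  shows "ssign \<pi> * (\<Prod>x\<in>{1..n}-{k}. B x (\<pi> x)) =
    (- 1) ^ (i + k) * (ssign \<sigma> * (\<Prod>r=1..n-1. minor k i B r (\<sigma> r)))"
proof -
  define ci ck where "ci = shift_cycle n i" and "ck = shift_cycle n k"
  have perm: "ci permutes {1..n}" "ck permutes {1..n}"
    using i k shift_cycle_permutes unfolding ci_def ck_def by auto
  have pm: "permutation ci" "permutation ck" "permutation \<sigma>"
    using perm \<sigma> permutes_imp_permutation by blast+
  have "ssign \<pi> = ssign ci * ssign \<sigma> * (ssign ck :: 'g smax)"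
    unfolding \<pi>_def ci_def[symmetric] ck_def[symmetric]
    using pm by (simp add: ssign_comp ssign_inv permutation_compose permutation_inverse)
  also have "\<dots> = (- 1) ^ (n - i + (n - k)) * ssign \<sigma>"
    unfolding ci_def ck_def ssign_shift_cycle by (simp add: power_add mult_ac)
  also have "(- 1 :: 'g smax) ^ (n - i + (n - k)) = (- 1) ^ (i + k)"
    using i k unfolding minus_one_power_smax by auto
  finally have sign: "ssign \<pi> = (- 1) ^ (i + k) * (ssign \<sigma> :: 'g smax)" .
  have "ck n = k" using k unfolding ck_def by (simp add: shift_cycle_apply)
  moreover have "{1..n} - {n} = {1..n-1}" by auto
  ultimately have "bij_betw ck {1..n-1} ({1..n}-{k})"
    using bij_betw_DiffI[OF permutes_imp_bij[OF perm(2)], of "{n}" "{k}"] k by (simp add: bij_betw_def)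
  from prod.reindex_bij_betw[OF this, of "\<lambda>x. B x (\<pi> x)"]
  have "(\<Prod>x\<in>{1..n}-{k}. B x (\<pi> x)) = (\<Prod>r=1..n-1. B (ck r) (ci (\<sigma> r)))"
    unfolding \<pi>_def ci_def[symmetric] ck_def[symmetric]
    by (simp add: permutes_inverses(2)[OF perm(2)])
  also have "\<dots> = (\<Prod>r=1..n-1. minor k i B r (\<sigma> r))"
  proof (rule prod.cong[OF refl])
    fix r assume "r \<in> {1..n-1}"
    then show "B (ck r) (ci (\<sigma> r)) = minor k i B r (\<sigma> r)"
      using i k permutes_in_image[OF \<sigma>, of r] minor_eq_shift_cycle[of i n k r "\<sigma> r" B]
      unfolding ci_def ck_def by auto
  qed
  finally show ?thesis using sign by (simp add: mult.assoc)
qed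

lemma adj_eq_sum_permutes:
  fixes B :: "'g::linordered_ab_group_add smat"
  assumes i: "i \<in> {1..n}" and k: "k \<in> {1..n}"
  shows "adj n B i k =
    (\<Sum>\<pi> | \<pi> permutes {1..n} \<and> \<pi> k = i. ssign \<pi> * (\<Prod>x\<in>{1..n}-{k}. B x (\<pi> x)))"
proof -
  define ci ck where "ci = shift_cycle n i" and "ck = shift_cycle n k"
  have perm: "ci permutes {1..n}" "ck permutes {1..n}"
    using i k shift_cycle_permutes unfolding ci_def ck_def by auto
  have at_n: "ci n = i" "ck n = k"
    using i k unfolding ci_def ck_def by (auto simp: shift_cycle_apply)
  have minus_n: "{1..n} - {n} = {1..n-1}" by auto
  have "adj n B i k = (\<Sum>\<sigma> | \<sigma> permutes {1..n} - {n}.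
      (- 1) ^ (i + k) * (ssign \<sigma> * (\<Prod>r=1..n-1. minor k i B r (\<sigma> r))))"
    unfolding adj_def sdet_def minus_n by (simp add: sum_distrib_left)
  also have "\<dots> = (\<Sum>\<sigma> | \<sigma> permutes {1..n} - {n}.
      ssign (ci \<circ> \<sigma> \<circ> inv ck) * (\<Prod>x\<in>{1..n}-{k}. B x ((ci \<circ> \<sigma> \<circ> inv ck) x)))"
  proof (rule sum.cong[OF refl])
    fix \<sigma> assume "\<sigma> \<in> {\<sigma>. \<sigma> permutes {1..n} - {n}}"
    then show "(- 1) ^ (i + k) * (ssign \<sigma> * (\<Prod>r=1..n-1. minor k i B r (\<sigma> r))) =
        ssign (ci \<circ> \<sigma> \<circ> inv ck) * (\<Prod>x\<in>{1..n}-{k}. B x ((ci \<circ> \<sigma> \<circ> inv ck) x))"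
      using conj_shift_cycle_term_eq_walk_weight[OF i k, of \<sigma> B] unfolding minus_n ci_def ck_def by simp
  qed
  also have "\<dots> = (\<Sum>\<pi> | \<pi> permutes {1..n} \<and> \<pi> k = i. ssign \<pi> * (\<Prod>x\<in>{1..n}-{k}. B x (\<pi> x)))"
    using sum.reindex_bij_betw[OF bij_betw_conj_permutes[OF perm, of n],
        of "\<lambda>\<pi>. ssign \<pi> * (\<Prod>x\<in>{1..n}-{k}. B x (\<pi> x))"]
    unfolding at_n by simp
  finally show ?thesis .
qed

lemma distinct_hd_eq_last: "distinct xs \<Longrightarrow> xs \<noteq> [] \<Longrightarrow> hd xs = last xs \<Longrightarrow> xs = [hd xs]"
  by (cases xs) (auto split: if_splits)

lemma cycle_of_list_snoc:
  "xs \<noteq> [] \<Longrightarrow> cycle_of_list (xs @ [x]) = cycle_of_list xs \<circ> transpose (last xs) x"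
proof (induction xs rule: induct_list012)
  case (3 a b ys)
  then show ?case by (simp add: comp_assoc)
qed simp_all

lemma cycle_of_list_Cons:
  assumes "distinct (x # xs)" "xs \<noteq> []"
  shows "cycle_of_list (x # xs) = cycle_of_list xs \<circ> transpose (last xs) x"
  using cycle_of_list_rotate_independent[OF assms(1), of 1] cycle_of_list_snoc[OF assms(2)] by simp

lemma permutes_obtain_cycle_path:
  assumes \<pi>: "\<pi> permutes S" and "finite S" "k \<in> S"
  obtains P where "distinct P" "P \<noteq> []" "hd P = \<pi> k" "last P = k" "set P \<subseteq> S"
    "\<forall>z\<in>set P. \<pi> z = cycle_of_list P z"
proof
  have perm: "permutation \<pi>" using assms permutes_imp_permutation by blast
  define m where "m = least_power \<pi> (\<pi> k)"
  have m: "0 < m" "(\<pi> ^^ m) (\<pi> k) = \<pi> k"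
    using least_power_of_permutation[OF perm] unfolding m_def by auto
  show "distinct (support \<pi> (\<pi> k))" using cycle_of_permutation[OF perm] .
  show "support \<pi> (\<pi> k) \<noteq> []" "hd (support \<pi> (\<pi> k)) = \<pi> k"
    using m(1) unfolding m_def[symmetric] by (simp_all add: hd_map)
  have "\<pi> ((\<pi> ^^ m) k) = \<pi> k" using m(2) by (simp add: funpow_swap1)
  then have "(\<pi> ^^ m) k = k" using permutes_inj[OF \<pi>] by (meson injD)
  moreover have "(\<pi> ^^ (m - 1)) (\<pi> k) = (\<pi> ^^ Suc (m - 1)) k"
    by (simp only: funpow_Suc_right o_apply)
  ultimately show "last (support \<pi> (\<pi> k)) = k"
    using m(1) unfolding m_def[symmetric] by (simp add: last_map)
  show "set (support \<pi> (\<pi> k)) \<subseteq> S"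
    using permutes_in_funpow_image[OF \<pi> permutes_in_image[OF \<pi>, THEN iffD2, OF assms(3)]] by auto
  show "\<forall>z\<in>set (support \<pi> (\<pi> k)). \<pi> z = cycle_of_list (support \<pi> (\<pi> k)) z"
    using cycle_restrict[OF perm] by blast
qed

lemma permutes_agree_on_cycle:
  assumes \<pi>: "\<pi> permutes S" and P: "set P \<subseteq> S" and agree: "\<forall>z\<in>set P. \<pi> z = cycle_of_list P z"
  shows "\<pi> ` (S - set P) = S - set P"
    and "\<pi> \<noteq> cycle_of_list P \<Longrightarrow> \<exists>z\<in>S - set P. \<pi> z \<noteq> z"
proof -
  have "\<pi> ` set P = set P"
    using agree permutes_image[OF cycle_permutes[of P]] by (auto simp: image_def)
  then show "\<pi> ` (S - set P) = S - set P"
    using permutes_image[OF \<pi>] permutes_inj[OF \<pi>] by (simp add: image_set_diff)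
next
  assume "\<pi> \<noteq> cycle_of_list P"
  then obtain z where z: "\<pi> z \<noteq> cycle_of_list P z" by auto
  moreover have "z \<in> S"
    using z permutes_not_in[OF \<pi>] permutes_not_in[OF permutes_subset[OF cycle_permutes P]] by metis
  moreover have "z \<notin> set P" using z agree by auto
  ultimately show "\<exists>z\<in>S - set P. \<pi> z \<noteq> z" by (auto simp: id_outside_supp)
qed

section \<open>The normalized matrix and its potential\<close>

locale simple_tpd =
  fixes n :: nat and A :: "'g::linordered_ab_group_add smat" and k :: nat
  assumes tpd: "TPD n A"
    and diag_sorted: "\<forall>i. 1 \<le> i \<and> i < n \<longrightarrow> A (Suc i) (Suc i) \<preceq> A i i"
    and k_range: "k \<in> {1..n}"
    and simple: "simple_eig n A k"
begin

definition dmod :: "nat \<Rightarrow> 'g" where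
  "dmod i = modulus (A i i)"

definition \<gamma> :: "'g smax" where
  "\<gamma> = A k k"

definition B :: "'g smat" where
  "B = (\<lambda>i j. \<gamma> * idm i j - A i j)"

definition C :: "'g smat" where
  "C = (\<lambda>i j. \<gamma> * idm i j - Dk A k i j)"

text \<open>\<open>cinv i\<close> inverts the diagonal entry \<open>C i i\<close> of the diagonal matrix \<open>C\<close>, so that
  \<open>M = C\<inverse> A\<^sup>(\<^sup>k\<^sup>)\<close>; \<open>cmod i\<close> is the modulus of \<open>C i i\<close>.\<close>

definition cinv :: "nat \<Rightarrow> 'g smax" where
  "cinv i = (if i < k then Nz SN (- dmod i) else Nz SP (- dmod k))"

definition cmod :: "nat \<Rightarrow> 'g" where
  "cmod i = (if i < k then dmod i else dmod k)"

definition M :: "'g smat" where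
  "M = (\<lambda>i j. cinv i * Ak A k i j)"

lemma A_diag: "i \<in> {1..n} \<Longrightarrow> A i i = Nz SP (dmod i)"
proof -
  assume "i \<in> {1..n}"
  then have "slt 0 (A i i)" using tpd unfolding TPD_def by blast
  then show ?thesis unfolding slt_def spositive_def minus_smax_def dmod_def
    by (auto simp: smax_unfold_0_1)
qed

lemma A_signed: "i \<in> {1..n} \<Longrightarrow> j \<in> {1..n} \<Longrightarrow> signed (A i j)"
  using tpd unfolding TPD_def by blast

lemma A_off_diag_bound:
  assumes "i \<in> {1..n}" "j \<in> {1..n}" "i \<noteq> j" "A i j \<noteq> 0"
  shows "modulus (A i j) + modulus (A i j) < dmod i + dmod j"
proof -
  obtain s a where Aij: "A i j = Nz s a" "s \<noteq> SB"
    using assms(4) A_signed[OF assms(1,2)] unfolding signed_def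
    by (cases "A i j") (auto simp: smax_unfold_0_1)
  have "slt ((A i j)\<^sup>2) (A i i * A j j)" using tpd assms unfolding TPD_def by blast
  then have "spositive (Nz SP (dmod i + dmod j) + - Nz SP (a + a))"
    using A_diag[OF assms(1)] A_diag[OF assms(2)] Aij unfolding slt_def minus_smax_def power2_eq_square
    by (cases s) auto
  then show ?thesis using Aij by (auto simp: spositive_def sadd_def split: if_splits)
qed

lemma dmod_antimono:
  assumes "1 \<le> i" "i \<le> j" "j \<le> n"
  shows "dmod j \<le> dmod i"
  using assms(2,3)
proof (induction j rule: dec_induct)
  case (step m)
  then have "A (Suc m) (Suc m) \<preceq> A m m" using diag_sorted assms(1) by auto
  then show ?case
    using step assms(1) A_diag[of m] A_diag[of "Suc m"] by (simp add: Nz_SP_spreceq_iff)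
qed simp

lemma dmod_less_before: "1 \<le> i \<Longrightarrow> i < k \<Longrightarrow> dmod k < dmod i"
proof -
  assume i: "1 \<le> i" "i < k"
  then have "gam n A (k - 1) \<succ> gam n A k" using simple unfolding simple_eig_def by simp
  moreover have "k - 1 \<in> {1..n}" using i k_range by auto
  ultimately have "dmod k < dmod (k - 1)"
    using k_range A_diag[of k] A_diag[of "k - 1"] by (simp add: gam_def Nz_SP_ssucc_iff)
  also have "\<dots> \<le> dmod i" using dmod_antimono[of i "k - 1"] i k_range by simp
  finally show ?thesis .
qed

lemma dmod_less_after: "k < i \<Longrightarrow> i \<le> n \<Longrightarrow> dmod i < dmod k"
proof -
  assume i: "k < i" "i \<le> n"
  have "dmod i \<le> dmod (Suc k)" using dmod_antimono[of "Suc k" i] i by simp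
  also have "gam n A k \<succ> gam n A (Suc k)" using simple unfolding simple_eig_def by simp
  then have "dmod (Suc k) < dmod k"
    using k_range i A_diag[of k] A_diag[of "Suc k"] by (simp add: gam_def Nz_SP_ssucc_iff)
  finally show ?thesis .
qed

lemma dmod_le_cmod: "i \<in> {1..n} \<Longrightarrow> dmod i \<le> cmod i"
  using dmod_less_after[of i] unfolding cmod_def by (cases "k < i") auto

lemma \<gamma>_eq: "\<gamma> = Nz SP (dmod k)"
  using A_diag k_range unfolding \<gamma>_def by simp

lemma B_off_diag: "i \<noteq> j \<Longrightarrow> B i j = - A i j"
  unfolding B_def idm_def minus_smax_def by (simp add: smax_unfold_0_1)

lemma C_off_diag: "i \<noteq> j \<Longrightarrow> C i j = 0"
  unfolding C_def idm_def Dk_def minus_smax_def by simp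

lemma C_diag: "i \<in> {1..n} \<Longrightarrow> C i i = (if i < k then Nz SN (dmod i) else Nz SP (dmod k))"
  using dmod_less_before[of i] A_diag[of i]
  unfolding C_def idm_def Dk_def minus_smax_def \<gamma>_eq by (auto simp: smax_unfold_0_1)

lemma B_diag_eq_C: "i \<in> {1..n} \<Longrightarrow> i \<noteq> k \<Longrightarrow> B i i = C i i"
  using dmod_less_after[of i] A_diag[of i] C_diag[of i]
  unfolding B_def C_def idm_def Dk_def minus_smax_def \<gamma>_eq
  by (cases "k < i") (auto simp: smax_unfold_0_1)

lemma cinv_mult_C: "i \<in> {1..n} \<Longrightarrow> cinv i * C i i = 1"
  unfolding C_diag cinv_def by (simp add: smax_unfold_0_1)

lemma C_diag_nonzero: "i \<in> {1..n} \<Longrightarrow> C i i \<noteq> 0"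
  and modulus_C_diag: "i \<in> {1..n} \<Longrightarrow> modulus (C i i) = cmod i"
  and signed_C_diag: "i \<in> {1..n} \<Longrightarrow> signed (C i i)"
  unfolding C_diag cmod_def signed_def by (simp_all add: smax_unfold_0_1)

lemma cinv_nonzero: "cinv i \<noteq> 0"
  and modulus_cinv: "modulus (cinv i) = - cmod i"
  unfolding cinv_def cmod_def by (simp_all add: smax_unfold_0_1)

lemma M_kk: "M k k = 1"
  using A_diag k_range unfolding M_def Ak_def cinv_def by (simp add: smax_unfold_0_1)

lemma M_entry_bound:
  assumes "i \<in> {1..n}" "j \<in> {1..n}" "M i j \<noteq> 0" "\<not> (i = k \<and> j = k)"
  shows "modulus (M i j) + modulus (M i j) + cmod i < cmod j"
proof (cases "i = j")
  case True
  then have "k < i" and Mii: "M i i = cinv i * A i i"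
    using assms unfolding M_def Ak_def by (auto simp: smax_unfold_0_1 split: if_splits)
  then show ?thesis
    using dmod_less_after[of i] assms(1) A_diag[OF assms(1)] \<open>i = j\<close> unfolding cinv_def cmod_def
    by (simp add: algebra_simps add_strict_mono)
next
  case False
  then have Mij: "M i j = cinv i * A i j" unfolding M_def Ak_def by simp
  then have Anz: "A i j \<noteq> 0" using assms(3) by (auto simp: smax_unfold_0_1)
  have mM: "modulus (M i j) = modulus (A i j) - cmod i"
    using Mij Anz cinv_nonzero by (simp add: modulus_mult modulus_cinv)
  have "modulus (M i j) + modulus (M i j) + cmod i = modulus (A i j) + modulus (A i j) - cmod i"
    unfolding mM by (simp add: algebra_simps)
  also have "\<dots> < dmod i + dmod j - cmod i"
    using A_off_diag_bound[OF assms(1,2) False Anz] by simp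
  also have "\<dots> \<le> cmod j"
    using add_mono[OF dmod_le_cmod[OF assms(1)] dmod_le_cmod[OF assms(2)]] by (simp add: algebra_simps)
  finally show ?thesis .
qed

lemma M_diag_negligible: "i \<in> {1..n} \<Longrightarrow> i \<noteq> k \<Longrightarrow> negligible 0 (M i i)"
  using M_entry_bound[of i i] less_of_double_less[of "modulus (M i i)" 0]
  unfolding negligible_def by auto

end

section \<open>Walks of the normalized matrix and its Kleene star\<close>

context simple_tpd
begin

definition epaths :: "nat \<Rightarrow> nat list set" where
  "epaths i = {P. distinct P \<and> P \<noteq> [] \<and> hd P = i \<and> last P = k \<and> set P \<subseteq> {1..n}}"

definition path_sum :: "nat \<Rightarrow> 'g smax" where
  "path_sum i = (\<Sum>P\<in>epaths i. walk_weight M P)"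

lemma length_epath: "P \<in> epaths i \<Longrightarrow> length P \<le> n"
  unfolding epaths_def by (metis (mono_tags) card_atLeastAtMost card_mono diff_Suc_1
      distinct_card finite_atLeastAtMost mem_Collect_eq)

lemma finite_epaths: "finite (epaths i)"
proof -
  have "epaths i \<subseteq> {w. set w \<subseteq> {1..n} \<and> length w \<le> n}"
    using length_epath unfolding epaths_def by blast
  then show ?thesis using finite_lists_length_le[of "{1..n}" n] finite_subset by blast
qed

lemma epaths_k: "epaths k = {[k]}"
  using k_range distinct_hd_eq_last unfolding epaths_def by fastforce

lemma path_sum_k: "path_sum k = 1"
  unfolding path_sum_def epaths_k by simp

lemma walk_weight_bound:
  assumes "xs \<noteq> []" "set xs \<subseteq> {1..n}"
  shows "walk_weight M xs = 0 \<or> (walk_weight M xs = 1 \<and> hd xs = last xs) \<or>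
    (walk_weight M xs \<noteq> 0 \<and> modulus (walk_weight M xs) + modulus (walk_weight M xs) + cmod (hd xs)
      < cmod (last xs))"
  using assms
proof (induction xs rule: induct_list012)
  case (3 x y zs)
  let ?w = "walk_weight M (y # zs)"
  have xy: "x \<in> {1..n}" "y \<in> {1..n}" using "3.prems" by auto
  have IH: "?w = 0 \<or> (?w = 1 \<and> y = last (y # zs)) \<or>
      (?w \<noteq> 0 \<and> modulus ?w + modulus ?w + cmod y < cmod (last (y # zs)))"
    using "3.IH"(2) "3.prems" by simp
  show ?case
  proof (cases "M x y = 0 \<or> ?w = 0")
    case False
    then have mod: "walk_weight M (x # y # zs) \<noteq> 0"
      "modulus (walk_weight M (x # y # zs)) = modulus (M x y) + modulus ?w"
      by (simp_all add: mult_eq_0_iff_smax modulus_mult)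
    show ?thesis
    proof (cases "x = k \<and> y = k")
      case True
      then show ?thesis using IH M_kk by auto
    next
      case False
      then have e: "modulus (M x y) + modulus (M x y) + cmod x < cmod y"
        using M_entry_bound[OF xy] \<open>\<not> (M x y = 0 \<or> ?w = 0)\<close> by blast
      from IH \<open>\<not> (M x y = 0 \<or> ?w = 0)\<close> show ?thesis
      proof (elim disjE)
        assume "?w = 1 \<and> y = last (y # zs)"
        then show ?thesis using e mod by simp
      next
        assume IH': "?w \<noteq> 0 \<and> modulus ?w + modulus ?w + cmod y < cmod (last (y # zs))"
        have "modulus (M x y * ?w) + modulus (M x y * ?w) + cmod x =
            (modulus (M x y) + modulus (M x y) + cmod x) + (modulus ?w + modulus ?w)"
          unfolding mod(2)[simplified] by (simp add: algebra_simps)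
        also have "\<dots> < cmod y + (modulus ?w + modulus ?w)" using e by simp
        also have "\<dots> < cmod (last (y # zs))" using IH' by (simp add: algebra_simps)
        finally show ?thesis using mod(1) by simp
      qed simp
    qed
  qed (auto simp: mult_eq_0_iff_smax)
qed (auto simp: smax_unfold_0_1)

lemma closed_walk_weight:
  assumes "xs \<noteq> []" "set xs \<subseteq> {1..n}" "hd xs = last xs"
  shows "walk_weight M xs \<preceq> 1"
  using walk_weight_bound[OF assms(1,2)] assms(3) less_of_double_less[of _ 0]
  by (auto intro: spreceq_if_modulus_less)

text \<open>Removing a closed subwalk does not decrease the weight.\<close>

lemma walk_dominated_by_epath:
  "w \<noteq> [] \<Longrightarrow> hd w = i \<Longrightarrow> last w = k \<Longrightarrow> set w \<subseteq> {1..n} \<Longrightarrow>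
    \<exists>P\<in>epaths i. walk_weight M w \<preceq> walk_weight M P"
proof (induction "length w" arbitrary: w rule: less_induct)
  case less
  show ?case
  proof (cases "distinct w")
    case True
    then have "w \<in> epaths i" using less.prems unfolding epaths_def by auto
    then show ?thesis by (blast intro: spreceq_refl)
  next
    case False
    then obtain xs y ys zs where w: "w = xs @ [y] @ ys @ [y] @ zs"
      using not_distinct_decomp by blast
    define w' where "w' = xs @ [y] @ zs"
    have "walk_weight M w = walk_weight M (xs @ [y]) * walk_weight M (y # ys @ y # zs)"
      using w walk_weight_append[of M xs y "ys @ y # zs"] by simp
    also have "walk_weight M (y # ys @ y # zs) = walk_weight M (y # ys @ [y]) * walk_weight M (y # zs)"
      using walk_weight_append[of M "y # ys" y zs] by simp
    finally have "walk_weight M w = walk_weight M (y # ys @ [y]) * walk_weight M w'"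
      unfolding w'_def using walk_weight_append[of M xs y zs] by (simp add: ac_simps)
    moreover have "walk_weight M (y # ys @ [y]) \<preceq> 1"
      using less.prems w by (intro closed_walk_weight) auto
    ultimately have "walk_weight M w \<preceq> walk_weight M w'"
      using spreceq_mult_right[of _ 1 "walk_weight M w'"] by simp
    moreover have "length w' < length w" "w' \<noteq> []" "hd w' = i" "last w' = k" "set w' \<subseteq> {1..n}"
      using less.prems w unfolding w'_def by (auto simp: hd_append)
    ultimately show ?thesis using less.hyps by (blast intro: spreceq_trans)
  qed
qed

lemma sum_walks_eq_path_sum:
  assumes "finite W" "\<forall>w\<in>W. w \<noteq> [] \<and> hd w = i \<and> last w = k \<and> set w \<subseteq> {1..n}"
    and "\<forall>P\<in>epaths i. \<exists>w\<in>W. walk_weight M P \<preceq> walk_weight M w"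
  shows "(\<Sum>w\<in>W. walk_weight M w) = path_sum i"
  unfolding path_sum_def
  using assms walk_dominated_by_epath by (intro sum_eq_sum_if_dominated finite_epaths) auto

lemma kstar_eq_path_sum:
  assumes "i \<in> {1..n}" and X: "\<forall>a\<in>{1..n}. \<forall>b\<in>{1..n}. X a b = M a b"
  shows "kstar n X i k = path_sum i"
proof (rule kstar_eqI)
  fix m assume "n \<le> m"
  have "(\<Sum>p\<le>m. mpow n X p i k) = (\<Sum>w\<in>(\<Union>p\<le>m. walks n p i k). walk_weight M w)"
    unfolding sum_mpow_eq_sum_walks[OF assms(1) k_range]
    by (intro sum.cong refl walk_weight_cong[OF _ X]) (auto simp: walks_def)
  also have "\<dots> = path_sum i"
  proof (rule sum_walks_eq_path_sum)
    have "P \<in> walks n (length P - 1) i k" "length P - 1 \<le> m" if "P \<in> epaths i" for P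
      using that length_epath[OF that] \<open>n \<le> m\<close> unfolding epaths_def walks_def by auto
    then show "\<forall>P\<in>epaths i. \<exists>w\<in>\<Union>p\<le>m. walks n p i k. walk_weight M P \<preceq> walk_weight M w"
      by (metis UN_iff atMost_iff spreceq_refl)
    show "finite (\<Union>p\<le>m. walks n p i k)" by (simp add: finite_walks)
    show "\<forall>w\<in>\<Union>p\<le>m. walks n p i k. w \<noteq> [] \<and> hd w = i \<and> last w = k \<and> set w \<subseteq> {1..n}"
      by (auto simp: walks_def)
  qed
  finally show "(\<Sum>p\<le>m. mpow n X p i k) = path_sum i" .
qed

lemma path_sum_fixpoint:
  assumes i: "i \<in> {1..n}"
  shows "(\<Sum>j=1..n. M i j * path_sum j) = path_sum i"
proof -
  define W where "W = Cons i ` (\<Union>j\<in>{1..n}. epaths j)"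
  have "(\<Sum>j=1..n. M i j * path_sum j) = (\<Sum>j=1..n. \<Sum>P\<in>epaths j. walk_weight M (i # P))"
    unfolding path_sum_def sum_distrib_left
    by (intro sum.cong refl) (auto simp: epaths_def neq_Nil_conv)
  also have "\<dots> = (\<Sum>P\<in>(\<Union>j\<in>{1..n}. epaths j). walk_weight M (i # P))"
    by (rule sum.UNION_disjoint[symmetric]) (simp, simp add: finite_epaths, auto simp: epaths_def)
  also have "\<dots> = (\<Sum>w\<in>W. walk_weight M w)"
    unfolding W_def by (rule sum.reindex[symmetric, unfolded comp_def]) (auto intro: inj_onI)
  also have "\<dots> = path_sum i"
  proof (rule sum_walks_eq_path_sum)
    show "\<forall>P\<in>epaths i. \<exists>w\<in>W. walk_weight M P \<preceq> walk_weight M w"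
    proof
      fix P assume P: "P \<in> epaths i"
      show "\<exists>w\<in>W. walk_weight M P \<preceq> walk_weight M w"
      proof (cases "i = k")
        case True
        then have "[k, k] \<in> W" using k_range epaths_k unfolding W_def by blast
        moreover have "P = [k]" using P epaths_k True by simp
        ultimately show ?thesis using M_kk spreceq_refl by force
      next
        case False
        obtain P' where P': "P = i # P'" using P unfolding epaths_def by (cases P) auto
        then have "P' \<noteq> []" using P False unfolding epaths_def by auto
        then have P'_path: "P' \<in> epaths (hd P')" using P P' unfolding epaths_def by auto
        then have "set P' \<subseteq> {1..n}" unfolding epaths_def by auto
        then have "hd P' \<in> {1..n}" using hd_in_set[OF \<open>P' \<noteq> []\<close>] by (rule subsetD)
        then have "P \<in> W" using P' P'_path unfolding W_def by blast
        then show ?thesis by (blast intro: spreceq_refl)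
      qed
    qed
    show "finite W" unfolding W_def by (simp add: finite_epaths)
    show "\<forall>w\<in>W. w \<noteq> [] \<and> hd w = i \<and> last w = k \<and> set w \<subseteq> {1..n}"
      using i unfolding W_def epaths_def by auto
  qed
  finally show ?thesis .
qed

lemma path_sum_eq_off_diag_sum:
  assumes i: "i \<in> {1..n}" "i \<noteq> k"
  shows "path_sum i = (\<Sum>j\<in>{1..n}-{i}. M i j * path_sum j)"
proof -
  have "path_sum i = (\<Sum>j=1..n. M i j * path_sum j)"
    using path_sum_fixpoint[OF i(1)] by (rule sym)
  also have "\<dots> = M i i * path_sum i + (\<Sum>j\<in>{1..n}-{i}. M i j * path_sum j)"
    by (rule sum.remove) (use i in auto)
  also have "\<dots> = (\<Sum>j\<in>{1..n}-{i}. M i j * path_sum j) + M i i * path_sum i"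
    by (rule add.commute)
  finally have eq: "path_sum i = (\<Sum>j\<in>{1..n}-{i}. M i j * path_sum j) + M i i * path_sum i" .
  show ?thesis
  proof (cases "path_sum i = 0")
    case True
    show ?thesis using eq unfolding True by simp
  next
    case False
    have "negligible (modulus (path_sum i)) (M i i * path_sum i)"
    proof (cases "M i i = 0")
      case False
      then have "modulus (M i i) < 0" using M_diag_negligible[OF i] unfolding negligible_def by blast
      then show ?thesis using False \<open>path_sum i \<noteq> 0\<close> unfolding negligible_def
        by (simp add: modulus_mult)
    qed (simp add: negligible_def)
    then show ?thesis using eq_of_add_negligible[OF eq] False by simp
  qed
qed

end

section \<open>The adjugate column as a sum over elementary paths\<close>

context simple_tpd
begin

definition adj_term :: "(nat \<Rightarrow> nat) \<Rightarrow> 'g smax" where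
  "adj_term \<pi> = (\<Prod>x\<in>{1..n}-{k}. B x (\<pi> x))"

definition lam :: "'g smax" where
  "lam = (\<Prod>x\<in>{1..n}-{k}. B x x)"

lemma lam_eq: "lam = (- 1) ^ (k - 1) * (\<Prod>i=1..k-1. A i i) * \<gamma> ^ (n - k)"
proof -
  have "{1..n}-{k} = {1..k-1} \<union> {Suc k..n}" using k_range by auto
  then have "lam = (\<Prod>x\<in>{1..k-1} \<union> {Suc k..n}. B x x)" unfolding lam_def by simp
  also have "\<dots> = (\<Prod>x=1..k-1. B x x) * (\<Prod>x=Suc k..n. B x x)"
    by (rule prod.union_disjoint) auto
  also have "(\<Prod>x=1..k-1. B x x) = (\<Prod>x=1..k-1. - 1 * A x x)"
  proof (rule prod.cong[OF refl])
    fix x assume "x \<in> {1..k-1}"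
    then have "x \<in> {1..n}" "x \<noteq> k" "x < k" using k_range by auto
    then show "B x x = - 1 * A x x" by (simp add: B_diag_eq_C C_diag A_diag one_smax_eq)
  qed
  also have "(\<Prod>x=Suc k..n. B x x) = (\<Prod>x=Suc k..n. \<gamma>)"
  proof (rule prod.cong[OF refl])
    fix x assume "x \<in> {Suc k..n}"
    then have "x \<in> {1..n}" "x \<noteq> k" "\<not> x < k" using k_range by auto
    then show "B x x = \<gamma>" by (simp add: B_diag_eq_C C_diag \<gamma>_eq)
  qed
  finally show ?thesis by (simp add: prod.distrib)
qed

lemma B_diag_off_k:
  assumes "i \<in> {1..n}" "i \<noteq> k"
  shows "B i i \<noteq> 0" "modulus (B i i) = cmod i" "cinv i * B i i = 1" "signed (B i i)"
  unfolding B_diag_eq_C[OF assms]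
  using C_diag_nonzero modulus_C_diag cinv_mult_C signed_C_diag assms(1) by blast+

lemma lam_nonzero: "lam \<noteq> 0" and signed_lam: "signed lam"
proof -
  have "\<forall>x\<in>{1..n}-{k}. B x x \<noteq> 0" "\<forall>x\<in>{1..n}-{k}. signed (B x x)"
    using B_diag_off_k by auto
  then show "lam \<noteq> 0" "signed lam"
    unfolding lam_def using prod_nonzero_smax[of "{1..n}-{k}" "\<lambda>x. B x x"]
      signed_prod[of "{1..n}-{k}" "\<lambda>x. B x x"] by simp_all
qed

text \<open>Each step of the path trades the diagonal factor \<open>B x x\<close> for \<open>B x y = - A x y\<close>;
  the sign of the added transposition compensates the minus.\<close>

lemma cycle_term_eq_walk_weight:
  assumes "distinct P" "P \<noteq> []" "last P = k" "set P \<subseteq> {1..n}"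
  shows "ssign (cycle_of_list P) * adj_term (cycle_of_list P) = lam * walk_weight M P"
  using assms
proof (induction P rule: induct_list012)
  case (2 x)
  then show ?case unfolding adj_term_def lam_def ssign_def by simp
next
  case (3 x y zs)
  define c' where "c' = cycle_of_list (y # zs)"
  define c where "c = cycle_of_list (x # y # zs)"
  have x: "x \<in> {1..n}" "x \<noteq> k" "x \<noteq> y" "x \<notin> set (y # zs)"
    using "3.prems" last_in_set[of "y # zs"] by auto
  have c: "c = c' \<circ> transpose k x"
    using cycle_of_list_Cons[of x "y # zs"] "3.prems"(1,3) unfolding c_def c'_def by simp
  have cx: "c x = y" using cycle_of_list_last[of "y # zs"] "3.prems" unfolding c c'_def by simp
  have c'x: "c' x = x" using x unfolding c'_def by (simp add: id_outside_supp)
  have cz: "c z = c' z" if "z \<noteq> x" "z \<noteq> k" for z using that unfolding c by simp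
  define X where "X = {1..n} - {k}"
  define Q where "Q = (\<Prod>z\<in>X-{x}. B z (c' z))"
  have xX: "x \<in> X" "finite X" using x unfolding X_def by auto
  have term_c: "adj_term c = B x y * Q"
    unfolding adj_term_def X_def[symmetric] Q_def prod.remove[OF xX(2,1)] cx
    using cz unfolding X_def by (auto intro!: prod.cong)
  have term_c': "adj_term c' = B x x * Q"
    unfolding adj_term_def X_def[symmetric] Q_def prod.remove[OF xX(2,1)] c'x ..
  have "permutation c'" unfolding c'_def by (rule permutation_of_cycle)
  then have sign: "ssign c = - ssign c'"
    using x(2) unfolding c
    by (simp add: ssign_comp permutation_swap_id ssign_transpose minus_mult_right_smax)
  have "ssign c * adj_term c = ssign c' * A x y * Q"
    unfolding sign term_c B_off_diag[OF x(3)] by (simp only: mult.assoc[symmetric] minus_mult_minus_smax)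
  also have "\<dots> = M x y * (ssign c' * adj_term c')"
    using B_diag_off_k(3)[OF x(1,2)] x(3) unfolding term_c' M_def Ak_def by (simp add: mult_ac)
  also have "\<dots> = lam * walk_weight M (x # y # zs)"
    using "3.IH"(2) "3.prems" unfolding c'_def by (simp add: mult_ac)
  finally show ?case unfolding c_def .
qed simp

lemma sum_modulus_B_less:
  assumes \<pi>: "\<pi> permutes {1..n}" and U: "U \<subseteq> {1..n} - {k}" "\<pi> ` U = U"
    and nz: "\<forall>x\<in>U. B x (\<pi> x) \<noteq> 0" and z: "z \<in> U" "\<pi> z \<noteq> z"
  shows "(\<Sum>x\<in>U. modulus (B x (\<pi> x))) < (\<Sum>x\<in>U. cmod x)"
proof -
  let ?h = "\<lambda>x. modulus (B x (\<pi> x))"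
  have bound: "?h x + ?h x \<le> cmod x + cmod (\<pi> x) \<and> (\<pi> x \<noteq> x \<longrightarrow> ?h x + ?h x < cmod x + cmod (\<pi> x))"
    if "x \<in> U" for x
  proof (cases "\<pi> x = x")
    case True
    have "x \<in> {1..n}" "x \<noteq> k" using that U(1) by auto
    then show ?thesis using True B_diag_off_k(2)[of x] by simp
  next
    case False
    have "\<pi> x \<in> U" using that U(2) by blast
    then have x: "x \<in> {1..n}" "\<pi> x \<in> {1..n}" using that U(1) by auto
    have "A x (\<pi> x) \<noteq> 0" using nz that B_off_diag[OF False[symmetric]] by auto
    then have "?h x + ?h x < dmod x + dmod (\<pi> x)"
      using A_off_diag_bound[OF x] False B_off_diag[OF False[symmetric]] by auto
    also have "\<dots> \<le> cmod x + cmod (\<pi> x)" using add_mono[OF dmod_le_cmod dmod_le_cmod] x .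
    finally show ?thesis using False by simp
  qed
  have fin: "finite U" using U(1) by (rule finite_subset) simp
  have "(\<Sum>x\<in>U. ?h x) + (\<Sum>x\<in>U. ?h x) = (\<Sum>x\<in>U. ?h x + ?h x)"
    by (simp add: sum.distrib)
  also have "\<dots> < (\<Sum>x\<in>U. cmod x + cmod (\<pi> x))"
    using bound z by (intro sum_strict_mono_ex1[OF fin]) blast+
  also have "\<dots> = (\<Sum>x\<in>U. cmod x) + (\<Sum>x\<in>U. cmod x)"
    using sum.reindex[of \<pi> U cmod] U(2) permutes_inj_on[OF \<pi>] by (simp add: sum.distrib)
  finally show ?thesis by (rule less_of_double_less)
qed

lemma adj_term_split:
  assumes "set P \<subseteq> {1..n}" "k \<in> set P"
  shows "adj_term \<sigma> = (\<Prod>x\<in>set P - {k}. B x (\<sigma> x)) * (\<Prod>x\<in>{1..n} - set P. B x (\<sigma> x))"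
proof -
  have eq: "{1..n} - {k} = (set P - {k}) \<union> ({1..n} - set P)" using assms by auto
  show ?thesis unfolding adj_term_def eq by (rule prod.union_disjoint) auto
qed

text \<open>Outside the cycle through \<open>k\<close>, a permutation can only lose weight compared with
  the diagonal of \<open>B\<close>, so its term is dominated by the term of that cycle alone.\<close>

lemma adj_term_dominated:
  assumes \<pi>: "\<pi> permutes {1..n}" and "\<pi> k = i"
  obtains P where "P \<in> epaths i"
    "ssign \<pi> * adj_term \<pi> \<preceq> ssign (cycle_of_list P) * adj_term (cycle_of_list P)"
proof -
  obtain P where P: "distinct P" "P \<noteq> []" "hd P = i" "last P = k" "set P \<subseteq> {1..n}"
    and agree: "\<forall>z\<in>set P. \<pi> z = cycle_of_list P z"
    using permutes_obtain_cycle_path[OF \<pi> _ k_range] assms(2) by auto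
  define c where "c = cycle_of_list P"
  define U where "U = {1..n} - set P"
  have "k \<in> set P" using P(2,4) last_in_set by blast
  then have U_sub: "U \<subseteq> {1..n} - {k}" unfolding U_def by auto
  note split = adj_term_split[OF P(5) \<open>k \<in> set P\<close>, folded U_def]
  have "ssign \<pi> * adj_term \<pi> \<preceq> ssign c * adj_term c"
  proof (cases "\<pi> = c \<or> adj_term \<pi> = 0")
    case False
    have nz: "\<forall>x\<in>{1..n}-{k}. B x (\<pi> x) \<noteq> 0"
      using False prod_zero[of "{1..n}-{k}" "\<lambda>x. B x (\<pi> x)"] unfolding adj_term_def by auto
    then have "(\<Prod>x\<in>set P - {k}. B x (\<pi> x)) \<noteq> 0" "(\<Prod>x\<in>U. B x (\<pi> x)) \<noteq> 0"
      using False unfolding split by (auto simp: mult_eq_0_iff_smax)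
    moreover have "(\<Prod>x\<in>set P - {k}. B x (\<pi> x)) = (\<Prod>x\<in>set P - {k}. B x (c x))"
      using agree unfolding c_def by simp
    moreover have "(\<Prod>x\<in>U. B x (c x)) \<noteq> 0 \<and> modulus (\<Prod>x\<in>U. B x (c x)) = (\<Sum>x\<in>U. cmod x)"
      using prod_nonzero_smax[of U "\<lambda>x. B x (c x)"] U_sub B_diag_off_k(1,2) id_outside_supp[of _ P]
      unfolding U_def c_def by (auto simp: subset_iff)
    moreover have "modulus (\<Prod>x\<in>U. B x (\<pi> x)) < (\<Sum>x\<in>U. cmod x)"
    proof -
      have nzU: "\<forall>x\<in>U. B x (\<pi> x) \<noteq> 0" using nz U_sub by blast
      obtain z where "z \<in> U" "\<pi> z \<noteq> z"
        using permutes_agree_on_cycle(2)[OF \<pi> P(5) agree] False unfolding U_def c_def by blast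
      then show ?thesis
        using prod_nonzero_smax[OF _ nzU] permutes_agree_on_cycle(1)[OF \<pi> P(5) agree]
          sum_modulus_B_less[OF \<pi> U_sub _ nzU] unfolding U_def by simp
    qed
    ultimately show ?thesis
      unfolding split
      by (intro spreceq_if_modulus_less) (auto simp: mult_eq_0_iff_smax ssign_nonzero modulus_mult)
  qed auto
  moreover have "P \<in> epaths i" using P unfolding epaths_def by simp
  ultimately show ?thesis using that unfolding c_def by blast
qed

lemma adj_col_eq_path_sum:
  assumes i: "i \<in> {1..n}"
  shows "adj n B i k = lam * path_sum i"
proof -
  let ?S = "{\<pi>. \<pi> permutes {1..n} \<and> \<pi> k = i}"
  let ?t = "\<lambda>\<pi>. ssign \<pi> * adj_term \<pi>"
  have cycle: "cycle_of_list P \<in> ?S" if "P \<in> epaths i" for P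
    using that permutes_subset[OF cycle_permutes, of P "{1..n}"] cycle_of_list_last[of P]
    unfolding epaths_def by auto
  have "adj n B i k = (\<Sum>\<pi>\<in>?S. ?t \<pi>)"
    unfolding adj_eq_sum_permutes[OF i k_range] adj_term_def ..
  also have "\<dots> = (\<Sum>P\<in>epaths i. ?t (cycle_of_list P))"
  proof (rule sum_eq_sum_if_dominated)
    show "finite ?S" using finite_permutations[of "{1..n}"] by (rule rev_finite_subset) auto
    show "\<forall>\<pi>\<in>?S. \<exists>P\<in>epaths i. ?t \<pi> \<preceq> ?t (cycle_of_list P)"
      using adj_term_dominated by blast
    show "\<forall>P\<in>epaths i. \<exists>\<pi>\<in>?S. ?t (cycle_of_list P) \<preceq> ?t \<pi>"
      using cycle spreceq_refl by blast
  qed (rule finite_epaths)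
  also have "\<dots> = (\<Sum>P\<in>epaths i. lam * walk_weight M P)"
    by (intro sum.cong refl cycle_term_eq_walk_weight) (auto simp: epaths_def)
  also have "\<dots> = lam * path_sum i"
    unfolding path_sum_def sum_distrib_left ..
  finally show ?thesis .
qed

end

section \<open>Eigenvector equations and uniqueness\<close>

context simple_tpd
begin

lemma mat_inv_C: "mat_inv n C = (\<lambda>i j. if i = j \<and> i \<in> {1..n} then cinv i else 0)"
  unfolding mat_inv_def
proof (rule the_equality)
  let ?E = "\<lambda>i j. if i = j \<and> i \<in> {1..n} then cinv i else (0::'g smax)"
  have C_cinv: "C i i * cinv i = 1" if "i \<in> {1..n}" for i
    using cinv_mult_C[OF that] by (simp add: mult.commute)
  have C_mmul: "mmul n C X i j = C i i * X i j" if "i \<in> {1..n}" for X i j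
    unfolding mmul_def using that by (intro sum_eq_single) (simp_all add: C_off_diag)
  have "mmul n ?E C i j = cinv i * C i j" if "i \<in> {1..n}" for i j
    unfolding mmul_def using that by (subst sum_eq_single[of "{1..n}" i]) auto
  then show "(\<forall>i j. \<not> (i \<in> {1..n} \<and> j \<in> {1..n}) \<longrightarrow> ?E i j = 0) \<and>
      (\<forall>i\<in>{1..n}. \<forall>j\<in>{1..n}. mmul n C ?E i j = idm i j \<and> mmul n ?E C i j = idm i j)"
    using C_mmul C_cinv cinv_mult_C C_off_diag unfolding idm_def by auto
  fix X assume X: "(\<forall>i j. \<not> (i \<in> {1..n} \<and> j \<in> {1..n}) \<longrightarrow> X i j = 0) \<and>
      (\<forall>i\<in>{1..n}. \<forall>j\<in>{1..n}. mmul n C X i j = idm i j \<and> mmul n X C i j = idm i j)"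
  have "X i j = ?E i j" if "i \<in> {1..n}" "j \<in> {1..n}" for i j
  proof -
    have "C i i * X i j = idm i j" using X that C_mmul[OF that(1), of X j] by simp
    then have "cinv i * (C i i * X i j) = cinv i * idm i j" by simp
    then show ?thesis using cinv_mult_C[OF that(1)] that unfolding idm_def
      by (auto simp: mult.assoc[symmetric])
  qed
  then show "X = ?E" using X by metis
qed

lemma mmul_inv_C_Ak: "i \<in> {1..n} \<Longrightarrow> mmul n (mat_inv n C) (Ak A k) i j = M i j"
  unfolding mat_inv_C mmul_def M_def by (subst sum_eq_single[of "{1..n}" i]) auto

lemma Ak_mult_path_sum:
  assumes i: "i \<in> {1..n}"
  shows "(\<Sum>j=1..n. Ak A k i j * path_sum j) = C i i * path_sum i"
proof -
  have "cinv i * (\<Sum>j=1..n. Ak A k i j * path_sum j) = path_sum i"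
    using path_sum_fixpoint[OF i] unfolding M_def by (simp add: sum_distrib_left mult.assoc)
  then have "C i i * (cinv i * (\<Sum>j=1..n. Ak A k i j * path_sum j)) = C i i * path_sum i" by simp
  then show ?thesis using cinv_mult_C[OF i] by (simp add: mult.assoc[symmetric] mult.commute)
qed

lemma eigvec_row_relation:
  assumes w: "eigvec n A \<gamma> w" and i: "i \<in> {1..n}" "i \<noteq> k"
  shows "w i \<nabla> (\<Sum>j\<in>{1..n}-{i}. M i j * w j)"
proof -
  define Y where "Y = (\<Sum>j\<in>{1..n}-{i}. A i j * w j)"
  have "mvmul n A w i = A i i * w i + Y"
    unfolding mvmul_def Y_def using sum.remove[of "{1..n}" i "\<lambda>j. A i j * w j"] i by simp
  moreover have "mvmul n A w i \<nabla> \<gamma> * w i" using w i unfolding eigvec_def by blast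
  ultimately have bal: "balanced (A i i * w i + Y + - (\<gamma> * w i))"
    unfolding nabla_def minus_smax_def by simp
  have Bii: "B i i = \<gamma> + - A i i" unfolding B_def idm_def minus_smax_def by simp
  have "- cinv i * (A i i * w i + Y + - (\<gamma> * w i)) = cinv i * B i i * w i + - (cinv i * Y)"
    unfolding Bii by (simp add: distrib_left distrib_right minus_mult_left_smax
        minus_mult_right_smax minus_add_smax ac_simps)
  also have "\<dots> = w i + - (\<Sum>j\<in>{1..n}-{i}. M i j * w j)"
    unfolding B_diag_off_k(3)[OF i] Y_def M_def Ak_def by (simp add: sum_distrib_left mult.assoc)
  finally show ?thesis using balanced_mult[OF bal, of "- cinv i"]
    unfolding nabla_def minus_smax_def by simp
qed

lemma M_term_negligible:
  assumes "i \<in> {1..n}" "j \<in> {1..n}" "j \<noteq> i"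
    and "z \<noteq> 0 \<Longrightarrow> modulus z \<le> \<delta>j" and "\<delta>j + \<delta>j + cmod j \<le> \<delta>i + \<delta>i + cmod i"
  shows "negligible \<delta>i (M i j * z)"
proof (cases "M i j = 0 \<or> z = 0")
  case False
  then have "modulus (M i j) + modulus (M i j) + cmod i < cmod j"
    using M_entry_bound assms(1-3) by blast
  have "(modulus (M i j) + modulus z) + (modulus (M i j) + modulus z) + cmod i =
      (modulus (M i j) + modulus (M i j) + cmod i) + (modulus z + modulus z)"
    by (simp add: algebra_simps)
  also have "\<dots> < cmod j + (\<delta>j + \<delta>j)"
    using add_less_le_mono[OF \<open>_ < cmod j\<close> add_mono[OF assms(4) assms(4)]] False by simp
  also have "\<dots> \<le> \<delta>i + \<delta>i + cmod i"
    using assms(5) by (simp add: algebra_simps)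
  finally have "(modulus (M i j) + modulus z) + (modulus (M i j) + modulus z) < \<delta>i + \<delta>i"
    by simp
  then have "modulus (M i j) + modulus z < \<delta>i" by (rule less_of_double_less)
  then show ?thesis using False unfolding negligible_def by (simp add: modulus_mult)
qed (auto simp: negligible_def mult_eq_0_iff_smax)

text \<open>Uniqueness: compare at an index where \<open>x\<close> and \<open>y\<close> differ and which maximizes
  twice the larger modulus plus the potential; there all terms coming from other such
  indices are negligible, and the remaining terms are common to both sides.\<close>

lemma eq_of_row_relations:
  assumes sx: "\<forall>i\<in>{1..n}. signed (x i)" and sy: "\<forall>i\<in>{1..n}. signed (y i)" and "x k = y k"
    and rx: "\<forall>i\<in>{1..n}-{k}. x i \<nabla> (\<Sum>j\<in>{1..n}-{i}. M i j * x j)"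
    and ry: "\<forall>i\<in>{1..n}-{k}. y i = (\<Sum>j\<in>{1..n}-{i}. M i j * y j)"
  shows "\<forall>i\<in>{1..n}. x i = y i"
proof (rule ccontr)
  assume "\<not> (\<forall>i\<in>{1..n}. x i = y i)"
  define D where "D = {i\<in>{1..n}. x i \<noteq> y i}"
  define \<delta> where "\<delta> i = max_modulus (x i) (y i)" for i
  define \<Phi> where "\<Phi> i = \<delta> i + \<delta> i + cmod i" for i
  have "finite D" "D \<noteq> {}" using \<open>\<not> (\<forall>i\<in>{1..n}. x i = y i)\<close> unfolding D_def by auto
  then obtain i where "i \<in> D" and max: "\<And>j. j \<in> D \<Longrightarrow> \<Phi> j \<le> \<Phi> i"
    using finite_obtain_max[of D \<Phi>] by blast
  then have i: "i \<in> {1..n} - {k}" "x i \<noteq> y i" using \<open>x k = y k\<close> unfolding D_def by auto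
  define N where "N = {1..n} - {i}"
  have negl: "negligible (\<delta> i) (\<Sum>j\<in>N \<inter> D. M i j * z j)" if z: "z = x \<or> z = y" for z
  proof (rule negligible_sum)
    show "\<forall>j\<in>N \<inter> D. negligible (\<delta> i) (M i j * z j)"
    proof
      fix j assume "j \<in> N \<inter> D"
      then have j: "j \<in> {1..n}" "j \<noteq> i" "\<Phi> j \<le> \<Phi> i" using max unfolding N_def D_def by auto
      have "z j \<noteq> 0 \<Longrightarrow> modulus (z j) \<le> \<delta> j"
        using z modulus_le_max_modulus unfolding \<delta>_def by blast
      then show "negligible (\<delta> i) (M i j * z j)"
        using M_term_negligible[of i j] i(1) j unfolding \<Phi>_def by blast
    qed
  qed (simp add: N_def)
  have split: "(\<Sum>j\<in>N. M i j * z j) = (\<Sum>j\<in>N - D. M i j * z j) + (\<Sum>j\<in>N \<inter> D. M i j * z j)"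
    for z :: "nat \<Rightarrow> 'g smax"
    using sum.Int_Diff[of N _ D] by (simp add: N_def add.commute)
  have common: "(\<Sum>j\<in>N - D. M i j * x j) = (\<Sum>j\<in>N - D. M i j * y j)"
    unfolding N_def D_def by (rule sum.cong) auto
  have xi: "x i \<nabla> (\<Sum>j\<in>N - D. M i j * x j) + (\<Sum>j\<in>N \<inter> D. M i j * x j)"
    using rx i(1) unfolding split[symmetric] unfolding N_def by blast
  have yi: "y i = (\<Sum>j\<in>N - D. M i j * y j) + (\<Sum>j\<in>N \<inter> D. M i j * y j)"
    using ry i(1) unfolding split[symmetric] unfolding N_def by blast
  have "signed (x i)" "signed (y i)" using sx sy i(1) by auto
  then have "x i = y i"
    using signed_eq_of_common_dominant_part[OF _ _ xi[unfolded common] yi] negl[of x] negl[of y]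
    unfolding \<delta>_def by simp
  with i(2) show False by contradiction
qed

lemma adj_col_eq_kstar:
  "i \<in> {1..n} \<Longrightarrow> adj n B i k = lam * kstar n (mmul n (mat_inv n C) (Ak A k)) i k"
  using adj_col_eq_path_sum kstar_eq_path_sum[of i "mmul n (mat_inv n C) (Ak A k)"]
    mmul_inv_C_Ak by simp

lemma Ak_mult_adj_col:
  assumes i: "i \<in> {1..n}"
  defines "v \<equiv> \<lambda>i. adj n B i k"
  shows "mvmul n (Ak A k) v i = \<gamma> * v i - mvmul n (Dk A k) v i"
proof -
  have "mvmul n (Ak A k) v i = lam * (\<Sum>j=1..n. Ak A k i j * path_sum j)"
    unfolding mvmul_def v_def by (simp add: adj_col_eq_path_sum sum_distrib_left mult_ac)
  also have "\<dots> = C i i * v i"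
    unfolding Ak_mult_path_sum[OF i] v_def adj_col_eq_path_sum[OF i] by (simp add: mult_ac)
  also have "C i i * v i = \<gamma> * v i - Dk A k i i * v i"
    unfolding C_def idm_def minus_smax_def by (simp add: distrib_right minus_mult_left_smax)
  also have "Dk A k i i * v i = mvmul n (Dk A k) v i"
    unfolding mvmul_def using i by (intro sum_eq_single[symmetric]) (simp_all add: Dk_def)
  finally show ?thesis .
qed

lemma A_eq_Dk_add_Ak: "A i j = Dk A k i j + Ak A k i j"
  unfolding Dk_def Ak_def by auto

lemma adj_col_eigvec:
  assumes "\<forall>i\<in>{1..n}. signed (adj n B i k)"
  shows "eigvec n A \<gamma> (\<lambda>i. adj n B i k)"
  unfolding eigvec_def
proof (intro conjI ballI bexI)
  show "adj n B k k \<noteq> 0" using adj_col_eq_path_sum[OF k_range] path_sum_k lam_nonzero by simp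
  fix i assume i: "i \<in> {1..n}"
  let ?v = "\<lambda>i. adj n B i k"
  define d where "d = mvmul n (Dk A k) ?v i"
  have "mvmul n A ?v i = d + mvmul n (Ak A k) ?v i"
    unfolding d_def mvmul_def by (subst A_eq_Dk_add_Ak) (simp add: distrib_right sum.distrib)
  also have "\<dots> = d + (\<gamma> * ?v i + - d)"
    using Ak_mult_adj_col[OF i] unfolding d_def minus_smax_def by simp
  finally have "mvmul n A ?v i - \<gamma> * ?v i = (d + - d) + (\<gamma> * ?v i + - (\<gamma> * ?v i))"
    unfolding minus_smax_def by (simp add: ac_simps)
  then show "mvmul n A ?v i \<nabla> \<gamma> * ?v i"
    unfolding nabla_def by (simp add: balanced_add balanced_add_minus)
qed (use assms k_range in auto)

lemma eigvec_unique:
  assumes "\<forall>i\<in>{1..n}. signed (adj n B i k)" and w: "eigvec n A \<gamma> w"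
  shows "\<exists>c. \<forall>i\<in>{1..n}. w i = c * adj n B i k"
proof -
  obtain lam' where lam': "lam' * lam = 1" "signed lam'"
    using signed_invertible[OF signed_lam lam_nonzero] .
  have "signed (path_sum i)" if "i \<in> {1..n}" for i
    using signed_mult[OF lam'(2), of "lam * path_sum i"] assms(1) that lam'(1)
    by (simp add: adj_col_eq_path_sum mult.assoc[symmetric])
  then have "\<forall>i\<in>{1..n}. w i = w k * path_sum i"
    using w k_range path_sum_k path_sum_eq_off_diag_sum eigvec_row_relation
    by (intro eq_of_row_relations)
      (auto simp: eigvec_def signed_mult sum_distrib_left mult_ac)
  moreover have "(w k * lam') * adj n B i k = w k * (lam' * lam) * path_sum i" if "i \<in> {1..n}" for i
    using adj_col_eq_path_sum[OF that] by (simp add: mult_ac)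
  ultimately have "\<forall>i\<in>{1..n}. w i = (w k * lam') * adj n B i k"
    using lam'(1) by simp
  then show ?thesis by blast
qed

end

theorem theorem5p21:
  fixes A :: "'g::linordered_ab_group_add smat" and n k :: nat
  assumes "divisible_group TYPE('g)"
    and "TPD n A"
    and "\<forall>i. 1 \<le> i \<and> i < n \<longrightarrow> A (Suc i) (Suc i) \<preceq> A i i"
    and "k \<in> {1..n}"
    and "simple_eig n A k"
  shows "let \<gamma> = A k k;
             B = (\<lambda>i j. \<gamma> * idm i j - A i j);
             v = (\<lambda>i. adj n B i k);
             lam = (- 1) ^ (k - 1) * (\<Prod>i=1..k-1. A i i) * \<gamma> ^ (n - k);
             E = mat_inv n (\<lambda>i j. \<gamma> * idm i j - Dk A k i j)
         in (\<forall>i\<in>{1..n}. v i = lam * kstar n (mmul n E (Ak A k)) i k)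
          \<and> (\<forall>i\<in>{1..n}. mvmul n (Ak A k) v i = \<gamma> * v i - mvmul n (Dk A k) v i)
          \<and> ((\<forall>i\<in>{1..n}. signed (v i)) \<longrightarrow>
               eigvec n A \<gamma> v \<and> (\<forall>w. eigvec n A \<gamma> w \<longrightarrow> (\<exists>c. \<forall>i\<in>{1..n}. w i = c * v i)))"
proof -
  interpret simple_tpd n A k using assms(2-5) by unfold_locales
  show ?thesis
    unfolding Let_def \<gamma>_def[symmetric] B_def[symmetric] C_def[symmetric] lam_eq[symmetric]
    using adj_col_eq_kstar Ak_mult_adj_col adj_col_eigvec eigvec_unique by blast
qed

end
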